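(* Let $\Omega\subset\mathbb{R}^2$ have properties (i), $( * )$ and $( ** )$, and let $\cosh_\Omega,\sinh_\Omega$ and $\cosh_{\Omega^\diamond},\sinh_{\Omega^\diamond}$ be defined as in the context. Then $\cosh_\Omega$ and $\sinh_\Omega$ are locally Lipschitz and therefore differentiable almost everywhere. If for an angle $\theta$ the set $\theta^\diamond$ consists of a single element $\eta$, then $$\frac{d}{d\theta}\cosh_\Omega\theta=\sinh_{\Omega^\diamond}\eta,\qquad \frac{d}{d\theta}\sinh_\Omega\theta=\cosh_{\Omega^\diamond}\eta.$$ There is at most a countable set of values of $\theta$ where the left and right derivatives of $\cosh_\Omega$ (respectively $\sinh_\Omega$) differ; at such $\theta$ the set $\{\sinh_{\Omega^\diamond}\eta:\eta\in\theta^\diamond\}$ (respectively $\{\cosh_{\Omega^\diamond}\eta:\eta\in\theta^\diamond\}$) lies between the left and right derivatives of $\cosh_\Omega$ (respectively $\sinh_\Omega$).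
   Context: Points of $\mathbb{R}^2$ are $(x,y)$, points of $\mathbb{R}^{2*}$ are $(p,q)$. Antipolar: $\Omega^\diamond=\{(p,q): px-qy\ge1\ \forall(x,y)\in\Omega\}$. Property (i): $\Omega$ nonempty, convex, closed, $0\notin\Omega$, $\lambda\Omega\subset\Omega$ for all $\lambda>1$. Property $( * )$: $\lambda\Omega\cap\partial\Omega=\varnothing$ for all $\lambda>1$. Property $( ** )$: with $C=\operatorname{cl}(\mathbb{R}_+\Omega)$ and $\partial C=l_0\cup l_1$ its two boundary rays, $\operatorname{dist}(l_0,\Omega)=\operatorname{dist}(l_1,\Omega)=0$. (Under these assumptions $\Omega^\diamond$ also has properties (i), $( * )$, $( ** )$.) Hyperbolic convex trigonometric functions: fix $\omega_0=(x_0,y_0)\in\partial\Omega$ and $\omega_0^\diamond=(p_0,q_0)\in\partial\Omega^\diamond$ with $p_0x_0-q_0y_0=1$. For $\omega=(x,y)\in\partial\Omega$ let $\theta$ be twice the signed area of the region bounded by the segment from the origin $O$ to $\omega_0$, the arc of $\partial\Omega$ from $\omega_0$ to $\omega$, and the segment from $\omega$ to $O$ (positive when the arc runs counterclockwise); set $\cosh_\Omega\theta=x$, $\sinh_\Omega\theta=y$. The domain of these functions is the (open) interval or line of values of $\theta$ obtained this way. The functions $\cosh_{\Omega^\diamond}\eta,\sinh_{\Omega^\diamond}\eta$ are defined in the same way from $\Omega^\diamond$ and $\omega_0^\diamond$ in the $(p,q)$-plane. For $\theta$ in the domain of $\cosh_\Omega$, $\theta^\diamond$ is the set of $\eta$ with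 $\cosh_\Omega\theta\cosh_{\Omega^\diamond}\eta-\sinh_\Omega\theta\sinh_{\Omega^\diamond}\eta=1$ (the left-hand side is always $\ge1$). *)

theory Defs
  imports "HOL-Analysis.Analysis"
begin

definition prop_i :: "(real \<times> real) set \<Rightarrow> bool" where
  "prop_i \<Omega> \<longleftrightarrow> \<Omega> \<noteq> {} \<and> convex \<Omega> \<and> closed \<Omega> \<and> (0::real\<times>real) \<notin> \<Omega> \<and>
     (\<forall>c::real. c > 1 \<longrightarrow> (\<lambda>w. c *\<^sub>R w) ` \<Omega> \<subseteq> \<Omega>)"

definition prop_star :: "(real \<times> real) set \<Rightarrow> bool" where
  "prop_star \<Omega> \<longleftrightarrow> (\<forall>c::real. c > 1 \<longrightarrow> (\<lambda>w. c *\<^sub>R w) ` \<Omega> \<inter> frontier \<Omega> = {})"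

definition ray :: "real \<times> real \<Rightarrow> (real \<times> real) set" where
  "ray u = {t *\<^sub>R u | t. t \<ge> 0}"

definition pos_cone :: "(real \<times> real) set \<Rightarrow> (real \<times> real) set" where
  "pos_cone \<Omega> = {t *\<^sub>R w | t w. t > 0 \<and> w \<in> \<Omega>}"

definition prop_2star :: "(real \<times> real) set \<Rightarrow> bool" where
  "prop_2star \<Omega> \<longleftrightarrow> (\<exists>u0 u1. u0 \<noteq> 0 \<and> u1 \<noteq> 0 \<and>
     frontier (closure (pos_cone \<Omega>)) = ray u0 \<union> ray u1 \<and>
     setdist (ray u0) \<Omega> = 0 \<and> setdist (ray u1) \<Omega> = 0)"

definition antipolar :: "(real \<times> real) set \<Rightarrow> (real \<times> real) set" where
  "antipolar \<Omega> = {(p, q). \<forall>(x, y) \<in> \<Omega>. p * x - q * y \<ge> 1}"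

definition cross :: "real \<times> real \<Rightarrow> real \<times> real \<Rightarrow> real" where
  "cross a b = fst a * snd b - snd a * fst b"

definition sector :: "real \<times> real \<Rightarrow> real \<times> real \<Rightarrow> (real \<times> real) set" where
  "sector a b = {s *\<^sub>R a + t *\<^sub>R b | s t. s \<ge> 0 \<and> t \<ge> 0}"

text \<open>Region bounded by the segment O--a, the arc of the boundary of \<Omega> from a to b,
  and the segment b--O: the union of the segments from O to the arc points.\<close>
definition arc_region :: "(real \<times> real) set \<Rightarrow> real \<times> real \<Rightarrow> real \<times> real \<Rightarrow> (real \<times> real) set" where
  "arc_region \<Omega> a b = {t *\<^sub>R w | t w. 0 \<le> t \<and> t \<le> 1 \<and> w \<in> frontier \<Omega> \<and> w \<in> sector a b}"

text \<open>The angle \<theta> of a boundary point \<omega>: twice the signed area, positive when the arc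
  from \<omega>0 to \<omega> runs counterclockwise.\<close>
definition conv_angle :: "(real \<times> real) set \<Rightarrow> real \<times> real \<Rightarrow> real \<times> real \<Rightarrow> real" where
  "conv_angle \<Omega> \<omega>0 \<omega> =
     (if cross \<omega>0 \<omega> \<ge> 0 then 1 else -1) * (2 * measure lebesgue (arc_region \<Omega> \<omega>0 \<omega>))"

definition conv_domain :: "(real \<times> real) set \<Rightarrow> real \<times> real \<Rightarrow> real set" where
  "conv_domain \<Omega> \<omega>0 = conv_angle \<Omega> \<omega>0 ` frontier \<Omega>"

definition conv_point :: "(real \<times> real) set \<Rightarrow> real \<times> real \<Rightarrow> real \<Rightarrow> real \<times> real" where
  "conv_point \<Omega> \<omega>0 \<theta> = (THE \<omega>. \<omega> \<in> frontier \<Omega> \<and> conv_angle \<Omega> \<omega>0 \<omega> = \<theta>)"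

definition cosh_conv :: "(real \<times> real) set \<Rightarrow> real \<times> real \<Rightarrow> real \<Rightarrow> real" where
  "cosh_conv \<Omega> \<omega>0 \<theta> = fst (conv_point \<Omega> \<omega>0 \<theta>)"

definition sinh_conv :: "(real \<times> real) set \<Rightarrow> real \<times> real \<Rightarrow> real \<Rightarrow> real" where
  "sinh_conv \<Omega> \<omega>0 \<theta> = snd (conv_point \<Omega> \<omega>0 \<theta>)"

definition dual_angles ::
  "(real \<times> real) set \<Rightarrow> real \<times> real \<Rightarrow> real \<times> real \<Rightarrow> real \<Rightarrow> real set" where
  "dual_angles \<Omega> \<omega>0 \<omega>0' \<theta> = {\<eta> \<in> conv_domain (antipolar \<Omega>) \<omega>0'.
     cosh_conv \<Omega> \<omega>0 \<theta> * cosh_conv (antipolar \<Omega>) \<omega>0' \<eta>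
       - sinh_conv \<Omega> \<omega>0 \<theta> * sinh_conv (antipolar \<Omega>) \<omega>0' \<eta> = 1}"

definition loc_lipschitz_on :: "real set \<Rightarrow> (real \<Rightarrow> real) \<Rightarrow> bool" where
  "loc_lipschitz_on D f \<longleftrightarrow> (\<forall>x\<in>D. \<exists>e>0. \<exists>L. \<forall>a\<in>D \<inter> ball x e. \<forall>b\<in>D \<inter> ball x e.
      \<bar>f a - f b\<bar> \<le> L * \<bar>a - b\<bar>)"

end

theory Submission
  imports Defs
begin

(* The boundary of Omega is parametrised by central projection onto the line
   {w. hdot omega0' w = 1}, which touches Omega at omega0: the ray through
   line_pt s = omega0 + s *R d meets the boundary at line_pt s /R h s, where h is concave because
   Omega is convex and invariant under dilations by factors > 1.  Twice the area swept from omega0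
   is a function of s with derivative 1 / (h s)^2, so angle and parameter are locally bi-Lipschitz
   and the boundary point is a locally Lipschitz function of the angle, with one-sided
   derivatives h s *R d - h'(s+) *R line_pt s and h s *R d - h'(s-) *R line_pt s.  With the
   coordinates swapped, h s *R d - beta *R line_pt s runs, for beta between h'(s+) and h'(s-),
   exactly through the points of the boundary of the antipolar that pair to 1 with the boundary
   point.  So theta^diamond is a singleton iff h is differentiable at s, which fails for
   countably many s only, and the dual coordinates are bracketed by the one-sided derivatives.
   Property prop_2star makes the antipolar satisfy prop_star as well, so that its boundary is
   parametrised in the same way. *)

section \<open>Area of a triangle in the plane\<close>

(* The library computes areas of triangles in real^2 (content_triangle); Lebesgue measure is
   transported from there to real * real. *)

definition vec_of_pair :: "real \<times> real \<Rightarrow> real^2" where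
  "vec_of_pair w = (\<chi> i. if i = 1 then fst w else snd w)"

definition pair_of_vec :: "real^2 \<Rightarrow> real \<times> real" where
  "pair_of_vec v = (v $ 1, v $ 2)"

lemma vec_of_pair_nth [simp]: "vec_of_pair w $ 1 = fst w" "vec_of_pair w $ 2 = snd w"
  by (auto simp: vec_of_pair_def)

lemma pair_of_vec_of_pair [simp]: "pair_of_vec (vec_of_pair w) = w"
  by (simp add: pair_of_vec_def)

lemma vec_of_pair_of_vec [simp]: "vec_of_pair (pair_of_vec v) = v"
  unfolding vec_of_pair_def pair_of_vec_def vec_eq_iff using exhaust_2 by auto

lemma linear_vec_of_pair: "linear vec_of_pair"
  by (rule linearI) (auto simp: vec_of_pair_def vec_eq_iff)

lemma pair_of_vec_measurable: "pair_of_vec \<in> borel_measurable borel"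
  unfolding pair_of_vec_def by (intro borel_measurable_continuous_onI continuous_intros)

lemma prod_Basis_vec2: "(\<Prod>b\<in>Basis. (v::real^2) \<bullet> b) = v $ 1 * v $ 2"
proof -
  have "Basis = {axis 1 1, axis 2 (1::real) :: real^2}"
    by (auto simp: Basis_vec_def) (metis exhaust_2)
  then have "(\<Prod>b\<in>Basis. v \<bullet> b) = (\<Prod>b\<in>{axis 1 1, axis 2 1}. v \<bullet> b)"
    by simp
  also have "\<dots> = v $ 1 * v $ 2"
    by (simp add: axis_eq_axis inner_axis)
  finally show ?thesis .
qed

lemma lborel_pair_eq_distr_pair_of_vec:
  "(lborel :: (real \<times> real) measure) = distr lborel borel pair_of_vec"
proof (rule lborel_eqI)
  fix l u :: "real \<times> real"
  assume le: "\<And>b. b \<in> Basis \<Longrightarrow> l \<bullet> b \<le> u \<bullet> b"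
  have "pair_of_vec -` box l u = box (vec_of_pair l) (vec_of_pair u)"
    by (auto simp: pair_of_vec_def mem_box_cart forall_2 mem_box Basis_prod_def inner_prod_def)
  then have "emeasure (distr lborel borel pair_of_vec) (box l u)
      = emeasure lborel (box (vec_of_pair l) (vec_of_pair u))"
    by (subst emeasure_distr) (auto simp: pair_of_vec_measurable)
  also have "\<dots> = ennreal (\<Prod>b\<in>Basis. (vec_of_pair u - vec_of_pair l) \<bullet> b)"
  proof (rule emeasure_lborel_box)
    fix b :: "real^2" assume "b \<in> Basis"
    then obtain i where b: "b = axis i 1" by (auto simp: Basis_vec_def)
    have "fst l \<le> fst u" "snd l \<le> snd u"
      using le[of "(1,0)"] le[of "(0,1)"] by (auto simp: Basis_prod_def inner_prod_def)
    then show "vec_of_pair l \<bullet> b \<le> vec_of_pair u \<bullet> b"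
      using exhaust_2[of i] by (auto simp: b inner_axis)
  qed
  also have "(\<Prod>b\<in>Basis. (vec_of_pair u - vec_of_pair l) \<bullet> b) = (\<Prod>b\<in>Basis. (u - l) \<bullet> b)"
    by (simp add: prod_Basis_vec2 Basis_prod_def prod.union_disjoint inner_prod_def)
  finally show "emeasure (distr lborel borel pair_of_vec) (box l u) = (\<Prod>b\<in>Basis. (u - l) \<bullet> b)" .
qed simp

lemma measure_vec_of_pair_image:
  assumes "S \<in> sets borel"
  shows "measure lborel (vec_of_pair ` S) = measure lborel S"
proof -
  have "measure lborel S = measure (distr lborel borel pair_of_vec) S"
    by (simp flip: lborel_pair_eq_distr_pair_of_vec)
  also have "\<dots> = measure lborel (pair_of_vec -` S)"
    using assms by (simp add: measure_distr pair_of_vec_measurable)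
  also have "pair_of_vec -` S = vec_of_pair ` S"
    by (auto simp: image_iff) (metis vec_of_pair_of_vec)
  finally show ?thesis by simp
qed

lemma measure_triangle_origin:
  fixes u v :: "real \<times> real"
  shows "measure lebesgue (convex hull {0, u, v}) = \<bar>cross u v\<bar> / 2"
proof -
  have "convex hull {0, u, v} \<in> sets borel"
    by (intro borel_closed compact_imp_closed finite_imp_compact_convex_hull) auto
  then have "measure lebesgue (convex hull {0, u, v}) = measure lborel (vec_of_pair ` (convex hull {0, u, v}))"
    by (simp add: measure_vec_of_pair_image)
  also have "vec_of_pair ` (convex hull {0, u, v}) = convex hull {vec_of_pair 0, vec_of_pair u, vec_of_pair v}"
    by (simp add: convex_hull_linear_image linear_vec_of_pair)
  also have "measure lborel \<dots> = \<bar>cross u v\<bar> / 2"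
    by (subst content_triangle) (simp add: cross_def abs_minus_commute algebra_simps)
  finally show ?thesis .
qed

lemma triangle_fmeasurable: "convex hull {0, u, v} \<in> fmeasurable lebesgue"
  by (intro lmeasurable_compact finite_imp_compact_convex_hull) auto

section \<open>Real analysis\<close>

lemma has_real_derivative_from_increment_bounds:
  fixes F g :: "real \<Rightarrow> real"
  assumes "0 < e" and cont: "isCont g x"
    and incr: "\<And>a b m M. x - e < a \<Longrightarrow> a < b \<Longrightarrow> b < x + e \<Longrightarrow>
        (\<And>\<sigma>. \<sigma> \<in> {a..b} \<Longrightarrow> m \<le> g \<sigma> \<and> g \<sigma> \<le> M) \<Longrightarrow>
        m * (b - a) \<le> F b - F a \<and> F b - F a \<le> M * (b - a)"
  shows "(F has_real_derivative g x) (at x)"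
  unfolding has_field_derivative_iff LIM_eq
proof (intro allI impI)
  fix \<epsilon> :: real assume "\<epsilon> > 0"
  then obtain \<delta> where "\<delta> > 0" and \<delta>: "\<And>\<sigma>. \<bar>\<sigma> - x\<bar> < \<delta> \<Longrightarrow> \<bar>g \<sigma> - g x\<bar> < \<epsilon> / 2"
    using cont[unfolded continuous_at_eps_delta] by (metis dist_real_def half_gt_zero)
  have "\<bar>(F y - F x) / (y - x) - g x\<bar> < \<epsilon>" if "y \<noteq> x" "\<bar>y - x\<bar> < min \<delta> e" for y
  proof -
    define a b where "a = min x y" and "b = max x y"
    have ab: "x - e < a" "a < b" "b < x + e" using that by (auto simp: a_def b_def)
    have "g x - \<epsilon> / 2 \<le> g \<sigma> \<and> g \<sigma> \<le> g x + \<epsilon> / 2" if "\<sigma> \<in> {a..b}" for \<sigma>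
    proof -
      have "\<bar>\<sigma> - x\<bar> < \<delta>" using that \<open>\<bar>y - x\<bar> < min \<delta> e\<close> by (auto simp: a_def b_def)
      then have "\<bar>g \<sigma> - g x\<bar> < \<epsilon> / 2" by (rule \<delta>)
      then show ?thesis unfolding abs_less_iff by linarith
    qed
    then have "(g x - \<epsilon> / 2) * (b - a) \<le> F b - F a \<and> F b - F a \<le> (g x + \<epsilon> / 2) * (b - a)"
      by (rule incr[OF ab])
    then have "g x - \<epsilon> / 2 \<le> (F b - F a) / (b - a) \<and> (F b - F a) / (b - a) \<le> g x + \<epsilon> / 2"
      using ab by (simp add: field_simps)
    moreover have "(F y - F x) / (y - x) = (F b - F a) / (b - a)"
      by (simp add: a_def b_def min_def max_def) (metis minus_diff_eq minus_divide_divide)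
    ultimately show ?thesis using \<open>\<epsilon> > 0\<close> unfolding abs_less_iff by linarith
  qed
  then show "\<exists>\<delta>>0. \<forall>y. y \<noteq> x \<and> norm (y - x) < \<delta> \<longrightarrow> norm ((F y - F x) / (y - x) - g x) < \<epsilon>"
    using \<open>\<delta> > 0\<close> \<open>0 < e\<close> by (intro exI[of _ "min \<delta> e"]) auto
qed

lemma lipschitz_on_scaleR:
  fixes f :: "'a::metric_space \<Rightarrow> real" and g :: "'a \<Rightarrow> 'b::real_normed_vector"
  assumes "A-lipschitz_on S f" "B-lipschitz_on S g" "S \<noteq> {}"
    and "\<And>x. x \<in> S \<Longrightarrow> \<bar>f x\<bar> \<le> M" "\<And>x. x \<in> S \<Longrightarrow> norm (g x) \<le> N"
  shows "(A * N + M * B)-lipschitz_on S (\<lambda>x. f x *\<^sub>R g x)"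
proof (rule lipschitz_onI)
  fix x y assume xy: "x \<in> S" "y \<in> S"
  have "f x *\<^sub>R g x - f y *\<^sub>R g y = (f x - f y) *\<^sub>R g x + f y *\<^sub>R (g x - g y)"
    by (simp add: algebra_simps)
  then have "dist (f x *\<^sub>R g x) (f y *\<^sub>R g y) \<le> \<bar>f x - f y\<bar> * norm (g x) + \<bar>f y\<bar> * norm (g x - g y)"
    by (metis dist_norm norm_scaleR norm_triangle_ineq)
  also have "\<dots> \<le> (A * dist x y) * N + M * (B * dist x y)"
    using lipschitz_onD[OF assms(1) xy] lipschitz_onD[OF assms(2) xy] assms(4,5)[OF xy(1)] assms(4)[OF xy(2)]
    by (intro add_mono mult_mono) (auto simp: dist_real_def dist_norm)
  finally show "dist (f x *\<^sub>R g x) (f y *\<^sub>R g y) \<le> (A * N + M * B) * dist x y"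
    by (simp add: algebra_simps)
next
  obtain z where "z \<in> S" using \<open>S \<noteq> {}\<close> by blast
  then show "0 \<le> A * N + M * B"
    using lipschitz_on_nonneg[OF assms(1)] lipschitz_on_nonneg[OF assms(2)] assms(4,5)[of z]
    by (meson abs_ge_zero add_nonneg_nonneg mult_nonneg_nonneg norm_ge_zero order_trans)
qed

lemma lipschitz_on_inverse:
  fixes f :: "'a::metric_space \<Rightarrow> real"
  assumes "A-lipschitz_on S f" "0 < m" "\<And>x. x \<in> S \<Longrightarrow> m \<le> f x"
  shows "(A / m\<^sup>2)-lipschitz_on S (\<lambda>x. inverse (f x))"
proof (rule lipschitz_onI)
  fix x y assume xy: "x \<in> S" "y \<in> S"
  have pos: "0 < f x" "0 < f y" using assms(2,3) xy by (auto intro: less_le_trans)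
  have "dist (inverse (f x)) (inverse (f y)) = \<bar>f x - f y\<bar> / (f x * f y)"
    using pos by (simp add: dist_real_def field_simps abs_minus_commute)
  also have "\<dots> \<le> A * dist x y / (m * m)"
    using lipschitz_onD[OF assms(1) xy] assms(2,3) xy pos
    by (intro frac_le mult_mono) (auto simp: dist_real_def)
  finally show "dist (inverse (f x)) (inverse (f y)) \<le> A / m\<^sup>2 * dist x y"
    by (simp add: power2_eq_square)
next
  show "0 \<le> A / m\<^sup>2" using lipschitz_on_nonneg[OF assms(1)] by simp
qed

lemma lipschitz_on_if_slopes_bounded:
  fixes f :: "real \<Rightarrow> real"
  assumes "\<And>a b. a \<in> S \<Longrightarrow> b \<in> S \<Longrightarrow> a < b \<Longrightarrow> \<bar>(f b - f a) / (b - a)\<bar> \<le> L" "0 \<le> L"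
  shows "L-lipschitz_on S f"
proof (rule lipschitz_onI)
  have *: "dist (f a) (f b) \<le> L * dist a b" if "a \<in> S" "b \<in> S" "a < b" for a b
    using assms(1)[OF that] that by (simp add: dist_real_def abs_minus_commute divide_le_eq)
  show "dist (f a) (f b) \<le> L * dist a b" if "a \<in> S" "b \<in> S" for a b
    using that *[of a b] *[of b a] by (cases a b rule: linorder_cases) (auto simp: dist_commute)
qed (rule assms(2))

lemma has_real_derivative_bounded_linear:
  assumes "bounded_linear l" "(f has_vector_derivative v) F"
  shows "((\<lambda>x. l (f x)) has_real_derivative l v) F"
proof -
  have "((\<lambda>x. l (f x)) has_derivative (\<lambda>x. l (x *\<^sub>R v))) F"
    using bounded_linear.has_derivative[OF assms(1) assms(2)[unfolded has_vector_derivative_def]] .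
  then show ?thesis
    by (simp add: has_real_derivative_iff_has_vector_derivative has_vector_derivative_def
        linear_simps[OF assms(1)])
qed

lemma loc_lipschitz_onI:
  assumes "\<And>x. x \<in> D \<Longrightarrow> \<exists>e>0. \<exists>L. L-lipschitz_on (D \<inter> ball x e) f"
  shows "loc_lipschitz_on D f"
  unfolding loc_lipschitz_on_def
proof
  fix x assume "x \<in> D"
  then obtain e L where "e > 0" "L-lipschitz_on (D \<inter> ball x e) f" using assms by blast
  then show "\<exists>e>0. \<exists>L. \<forall>a\<in>D \<inter> ball x e. \<forall>b\<in>D \<inter> ball x e. \<bar>f a - f b\<bar> \<le> L * \<bar>a - b\<bar>"
    using lipschitz_onD by (fastforce simp: dist_real_def)
qed

lemma affine_value_between:
  fixes a b x :: real
  assumes "a \<le> x" "x \<le> b"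
  shows "min (A - k * a) (A - k * b) \<le> A - k * x \<and> A - k * x \<le> max (A - k * a) (A - k * b)"
proof (cases "0 \<le> k")
  case True
  then have "k * a \<le> k * x" "k * x \<le> k * b" using assms by (auto intro: mult_left_mono)
  then show ?thesis by auto
next
  case False
  then have "k * x \<le> k * a" "k * b \<le> k * x" using assms by (auto intro: mult_left_mono_neg)
  then show ?thesis by auto
qed

section \<open>One-sided derivatives of concave functions\<close>

locale open_concave =
  fixes I :: "real set" and h :: "real \<Rightarrow> real"
  assumes open_I: "open I" and convex_I: "convex I" and concave: "concave_on I h"
begin

definition slope :: "real \<Rightarrow> real \<Rightarrow> real" where
  "slope a b = (h b - h a) / (b - a)"

definition right_deriv :: "real \<Rightarrow> real" where
  "right_deriv s = Sup (slope s ` ({s<..} \<inter> I))"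

definition left_deriv :: "real \<Rightarrow> real" where
  "left_deriv s = Inf (slope s ` ({..<s} \<inter> I))"

lemma slope_commute: "slope a b = slope b a"
  unfolding slope_def by (metis minus_diff_eq minus_divide_divide)

lemma mem_I_between: "x \<in> I \<Longrightarrow> z \<in> I \<Longrightarrow> x \<le> y \<Longrightarrow> y \<le> z \<Longrightarrow> y \<in> I"
  using convex_I is_interval_convex_1 mem_is_interval_1_I by blast

lemma slopes_decreasing:
  assumes "x \<in> I" "z \<in> I" "x < y" "y < z"
  shows "slope x z \<le> slope x y" "slope y z \<le> slope x z"
proof -
  have cv: "convex_on I (\<lambda>x. - h x)" using concave by (simp add: concave_on_def)
  have neg: "(h b - h a) / (a - b) = - slope a b" for a b
    unfolding slope_def by (metis minus_diff_eq divide_minus_right)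
  show "slope x z \<le> slope x y" "slope y z \<le> slope x z"
    using convex_on_slope_le[OF cv assms] neg[of y x] neg[of z x] neg[of z y] by simp_all
qed

lemma slope_le_slope_left: "x \<in> I \<Longrightarrow> z \<in> I \<Longrightarrow> x < y \<Longrightarrow> y < z \<Longrightarrow> slope y z \<le> slope x y"
  using slopes_decreasing by (metis order.trans)

lemma exists_left:
  assumes "s \<in> I" obtains u where "u \<in> I" "u < s"
proof -
  obtain e where "e > 0" "ball s e \<subseteq> I" using open_I assms open_contains_ball by blast
  then show ?thesis using that[of "s - e/2"] by (auto simp: dist_real_def subset_iff)
qed

lemma exists_right:
  assumes "s \<in> I" obtains u where "u \<in> I" "s < u"
proof -
  obtain e where "e > 0" "ball s e \<subseteq> I" using open_I assms open_contains_ball by blast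
  then show ?thesis using that[of "s + e/2"] by (auto simp: dist_real_def subset_iff)
qed

lemma bdd_above_right_slopes: "s \<in> I \<Longrightarrow> bdd_above (slope s ` ({s<..} \<inter> I))"
  by (metis (no_types, lifting) IntE bdd_aboveI2 exists_left greaterThan_iff slope_le_slope_left)

lemma bdd_below_left_slopes: "s \<in> I \<Longrightarrow> bdd_below (slope s ` ({..<s} \<inter> I))"
  by (metis (no_types, lifting) IntE bdd_belowI2 exists_right lessThan_iff slope_commute
      slope_le_slope_left)

lemma slope_le_right_deriv: "s \<in> I \<Longrightarrow> t \<in> I \<Longrightarrow> s < t \<Longrightarrow> slope s t \<le> right_deriv s"
  unfolding right_deriv_def by (rule cSup_upper) (auto simp: bdd_above_right_slopes)

lemma left_deriv_le_slope: "s \<in> I \<Longrightarrow> u \<in> I \<Longrightarrow> u < s \<Longrightarrow> left_deriv s \<le> slope s u"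
  unfolding left_deriv_def by (rule cInf_lower) (auto simp: bdd_below_left_slopes)

lemma right_deriv_le_left_deriv: assumes "s \<in> I" shows "right_deriv s \<le> left_deriv s"
proof -
  obtain u where u: "u \<in> I" "u < s" using exists_left assms by blast
  obtain t where t: "t \<in> I" "s < t" using exists_right assms by blast
  have "right_deriv s \<le> slope s v" if "v \<in> I" "v < s" for v
  proof -
    have "slope s x \<le> slope s v" if "x \<in> I" "s < x" for x
      using slope_le_slope_left[of v x s] that \<open>v \<in> I\<close> \<open>v < s\<close> by (simp add: slope_commute)
    then show ?thesis unfolding right_deriv_def using t by (intro cSup_least) auto
  qed
  then show ?thesis unfolding left_deriv_def using u by (intro cInf_greatest) auto
qed

lemma left_deriv_le_right_deriv:
  "s1 \<in> I \<Longrightarrow> s2 \<in> I \<Longrightarrow> s1 < s2 \<Longrightarrow> left_deriv s2 \<le> right_deriv s1"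
  using slope_le_right_deriv left_deriv_le_slope by (metis order.trans slope_commute)

lemma supergradient_iff:
  assumes "s \<in> I"
  shows "(\<forall>t\<in>I. h t \<le> h s + \<beta> * (t - s)) \<longleftrightarrow> right_deriv s \<le> \<beta> \<and> \<beta> \<le> left_deriv s"
proof
  assume H: "\<forall>t\<in>I. h t \<le> h s + \<beta> * (t - s)"
  obtain t where t: "t \<in> I" "s < t" using exists_right assms by blast
  obtain u where u: "u \<in> I" "u < s" using exists_left assms by blast
  have "slope s t' \<le> \<beta>" if "t' \<in> I" "s < t'" for t'
    using H that by (auto simp: slope_def divide_le_eq algebra_simps)
  then have "right_deriv s \<le> \<beta>" unfolding right_deriv_def using t by (intro cSup_least) auto
  moreover have "\<beta> \<le> slope s t'" if "t' \<in> I" "t' < s" for t'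
    using H that by (auto simp: slope_def le_divide_eq algebra_simps)
  then have "\<beta> \<le> left_deriv s" unfolding left_deriv_def using u by (intro cInf_greatest) auto
  ultimately show "right_deriv s \<le> \<beta> \<and> \<beta> \<le> left_deriv s" by simp
next
  assume B: "right_deriv s \<le> \<beta> \<and> \<beta> \<le> left_deriv s"
  show "\<forall>t\<in>I. h t \<le> h s + \<beta> * (t - s)"
  proof
    fix t assume t: "t \<in> I"
    consider "t = s" | "s < t" | "t < s" by linarith
    then show "h t \<le> h s + \<beta> * (t - s)"
    proof cases
      case 2
      then have "slope s t \<le> \<beta>" using slope_le_right_deriv[OF assms t] B by linarith
      then show ?thesis using 2 by (auto simp: slope_def divide_le_eq algebra_simps)
    next
      case 3
      then have "\<beta> \<le> slope s t" using left_deriv_le_slope[OF assms t] B by linarith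
      then show ?thesis using 3 by (auto simp: slope_def le_divide_eq algebra_simps)
    qed simp
  qed
qed

lemma has_right_derivative:
  assumes "s \<in> I"
  shows "(h has_real_derivative right_deriv s) (at s within {s..})"
proof -
  obtain u where u: "u \<in> I" "u < s" using exists_left assms by blast
  have "((\<lambda>t. - slope s t) \<longlongrightarrow> Inf ((\<lambda>t. - slope s t) ` ({s<..} \<inter> I))) (at s within {s<..} \<inter> I)"
  proof (rule Lim_right_bound)
    fix a b assume "a \<in> I" "b \<in> I" "s < a" "a \<le> b"
    then show "- slope s a \<le> - slope s b"
      using slopes_decreasing(1)[of s b a] assms by (cases "a = b") auto
  next
    fix a assume "a \<in> I" "s < a"
    then show "- slope u s \<le> - slope s a" using slope_le_slope_left[OF u(1) _ u(2)] by auto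
  qed
  moreover have "Inf ((\<lambda>t. - slope s t) ` ({s<..} \<inter> I)) = - right_deriv s"
    using exists_right[OF assms] bdd_above_right_slopes[OF assms]
    unfolding right_deriv_def Inf_real_def image_image by fastforce
  moreover have "at s within {s<..} \<inter> I = at s within {s..}"
    by (rule at_within_nhd[OF assms open_I]) auto
  ultimately have "(slope s \<longlongrightarrow> right_deriv s) (at s within {s..})"
    using tendsto_minus[of "\<lambda>t. - slope s t"] by fastforce
  then show ?thesis unfolding has_field_derivative_iff slope_def by simp
qed

lemma has_left_derivative:
  assumes "s \<in> I"
  shows "(h has_real_derivative left_deriv s) (at s within {..s})"
proof -
  obtain t where t: "t \<in> I" "s < t" using exists_right assms by blast
  have "((\<lambda>u. - slope s u) \<longlongrightarrow> Sup ((\<lambda>u. - slope s u) ` ({..<s} \<inter> I))) (at s within {..<s} \<inter> I)"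
  proof (rule Lim_left_bound)
    fix a b assume "a \<in> I" "b \<in> I" "b < s" "a \<le> b"
    then show "- slope s a \<le> - slope s b"
      using slopes_decreasing(2)[of a s b] assms by (cases "a = b") (auto simp: slope_commute)
  next
    fix a assume "a \<in> I" "a < s"
    then show "- slope s a \<le> - slope s t"
      using slope_le_slope_left[OF _ t(1) _ t(2)] by (auto simp: slope_commute)
  qed
  moreover have "Sup ((\<lambda>u. - slope s u) ` ({..<s} \<inter> I)) = - left_deriv s"
    using exists_left[OF assms] bdd_below_left_slopes[OF assms]
    unfolding left_deriv_def Inf_real_def image_image by fastforce
  moreover have "at s within {..<s} \<inter> I = at s within {..s}"
    by (rule at_within_nhd[OF assms open_I]) auto
  ultimately have "(slope s \<longlongrightarrow> left_deriv s) (at s within {..s})"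
    using tendsto_minus[of "\<lambda>u. - slope s u"] by fastforce
  then show ?thesis unfolding has_field_derivative_iff slope_def by simp
qed

lemma has_derivative_if_one_sided_eq:
  assumes "s \<in> I" "right_deriv s = left_deriv s"
  shows "(h has_real_derivative right_deriv s) (at s)"
proof -
  have "((\<lambda>y. (h y - h s) / (y - s)) \<longlongrightarrow> right_deriv s) (at s within {..s} \<union> {s..})"
    using has_left_derivative[OF assms(1)] has_right_derivative[OF assms(1)] assms(2)
    unfolding has_field_derivative_iff Lim_within_Un by simp
  moreover have "{..s} \<union> {s..} = (UNIV :: real set)" by auto
  ultimately show ?thesis unfolding has_field_derivative_iff by simp
qed

lemma countable_kinks: "countable {s \<in> I. right_deriv s \<noteq> left_deriv s}"
proof -
  let ?A = "{s \<in> I. right_deriv s \<noteq> left_deriv s}"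
  have "\<exists>q\<in>\<rat>. right_deriv s < q \<and> q < left_deriv s" if "s \<in> ?A" for s
    using that right_deriv_le_left_deriv[of s] Rats_dense_in_real[of "right_deriv s"] by force
  then obtain q where q: "\<And>s. s \<in> ?A \<Longrightarrow> q s \<in> \<rat> \<and> right_deriv s < q s \<and> q s < left_deriv s"
    by metis
  have "inj_on q ?A"
  proof (rule inj_onI, rule ccontr)
    fix x y assume "x \<in> ?A" "y \<in> ?A" "q x = q y" "x \<noteq> y"
    then show False
      using left_deriv_le_right_deriv[of x y] left_deriv_le_right_deriv[of y x] q[of x] q[of y]
      by (cases x y rule: linorder_cases) auto
  qed
  moreover have "countable (q ` ?A)"
    using q countable_rat by (meson countable_subset image_subsetI)
  ultimately show ?thesis using countable_image_inj_on by blast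
qed

lemma continuous_on: "continuous_on I h"
proof -
  have "continuous_on I (\<lambda>x. - h x)"
    using convex_on_continuous[OF open_I] concave by (simp add: concave_on_def)
  from continuous_on_minus[OF this] show ?thesis by simp
qed

lemma locally_lipschitz:
  assumes "s \<in> I"
  obtains e L where "e > 0" "cball s e \<subseteq> I" "L-lipschitz_on (cball s e) h"
proof -
  obtain e0 where e0: "e0 > 0" "ball s e0 \<subseteq> I" using open_I assms open_contains_ball by blast
  define e where "e = e0 / 3"
  have e: "e > 0" "cball s (2 * e) \<subseteq> I"
    using e0 by (auto simp: e_def dist_real_def subset_iff)
  then have ends: "s - 2*e \<in> I" "s + 2*e \<in> I" "s - e \<in> I" "s + e \<in> I"
    by (auto simp: dist_real_def subset_iff)
  define L where "L = max \<bar>slope (s - 2*e) (s - e)\<bar> \<bar>slope (s + e) (s + 2*e)\<bar>"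
  have "\<bar>slope a b\<bar> \<le> L" if ab: "a \<in> cball s e" "b \<in> cball s e" "a < b" for a b
  proof -
    have abI: "a \<in> I" "b \<in> I" using ab e by (auto simp: dist_real_def subset_iff)
    have "slope a b \<le> slope (s - 2*e) a"
      using slope_le_slope_left[of "s - 2*e" b a] abI ends ab e by (auto simp: dist_real_def)
    also have "\<dots> \<le> slope (s - 2*e) (s - e)"
      using slopes_decreasing(1)[of "s - 2*e" a "s - e"] abI ends ab e
      by (cases "a = s - e") (auto simp: dist_real_def)
    finally have upper: "slope a b \<le> slope (s - 2*e) (s - e)" .
    have "slope (s + e) (s + 2*e) \<le> slope b (s + 2*e)"
      using slopes_decreasing(2)[of b "s + 2*e" "s + e"] abI ends ab e
      by (cases "b = s + e") (auto simp: dist_real_def)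
    also have "\<dots> \<le> slope a b"
      using slope_le_slope_left[of a "s + 2*e" b] abI ends ab e by (auto simp: dist_real_def)
    finally show ?thesis using upper unfolding L_def by linarith
  qed
  then have "L-lipschitz_on (cball s e) h"
    by (intro lipschitz_on_if_slopes_bounded) (auto simp: slope_def L_def le_max_iff_disj)
  with e show ?thesis using that subset_cball[of e "2 * e" s] by auto
qed

end

section \<open>Antipolar sets\<close>

definition hdot :: "real \<times> real \<Rightarrow> real \<times> real \<Rightarrow> real" where
  "hdot u v = fst u * fst v - snd u * snd v"

lemma hdot_commute: "hdot u v = hdot v u"
  by (simp add: hdot_def mult.commute)

lemma hdot_scaleR [simp]: "hdot u (a *\<^sub>R v) = a * hdot u v" "hdot (a *\<^sub>R u) v = a * hdot u v"
  by (auto simp: hdot_def algebra_simps)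

lemma hdot_add [simp]: "hdot u (v + w) = hdot u v + hdot u w" "hdot (v + w) u = hdot v u + hdot w u"
  by (auto simp: hdot_def algebra_simps)

lemma hdot_diff [simp]: "hdot u (v - w) = hdot u v - hdot u w" "hdot (v - w) u = hdot v u - hdot w u"
  by (auto simp: hdot_def algebra_simps)

lemma hdot_zero [simp]: "hdot u 0 = 0" "hdot 0 u = 0"
  by (auto simp: hdot_def)

lemma hdot_le_norm: "\<bar>hdot u v\<bar> \<le> norm u * norm v"
proof -
  have "hdot u v = u \<bullet> (fst v, - snd v)" by (simp add: hdot_def inner_prod_def)
  moreover have "norm (fst v, - snd v) = norm v" by (simp add: norm_Pair norm_prod_def)
  ultimately show ?thesis using Cauchy_Schwarz_ineq2[of u "(fst v, - snd v)"] by simp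
qed

lemma closed_hdot_ge: "closed {\<pi>. a \<le> hdot \<pi> w}" "closed {w. a \<le> hdot \<pi> w}"
  unfolding hdot_def by (intro closed_Collect_le continuous_intros)+

lemma antipolar_iff: "\<pi> \<in> antipolar \<Omega> \<longleftrightarrow> (\<forall>w\<in>\<Omega>. 1 \<le> hdot \<pi> w)"
  by (auto simp: antipolar_def hdot_def case_prod_beta)

lemma antipolar_eq_Inter: "antipolar \<Omega> = (\<Inter>w\<in>\<Omega>. {\<pi>. 1 \<le> hdot \<pi> w})"
  by (auto simp: antipolar_iff)

lemma closed_antipolar: "closed (antipolar \<Omega>)"
  unfolding antipolar_eq_Inter by (simp add: closed_INT closed_hdot_ge(1))

lemma convex_hdot_ge: "convex {\<pi>. a \<le> hdot \<pi> w}"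
proof -
  have "{\<pi>. a \<le> hdot \<pi> w} = {\<pi>. (fst w, - snd w) \<bullet> \<pi> \<ge> a}"
    by (auto simp: hdot_def inner_prod_def mult.commute)
  then show ?thesis by (simp add: convex_halfspace_ge)
qed

lemma convex_antipolar: "convex (antipolar \<Omega>)"
  unfolding antipolar_eq_Inter by (intro convex_INT convex_hdot_ge)

lemma cross_scaleR_right [simp]: "cross u (a *\<^sub>R v) = a * cross u v"
  by (simp add: cross_def algebra_simps)

lemma cross_scaleR_left [simp]: "cross (a *\<^sub>R u) v = a * cross u v"
  by (simp add: cross_def algebra_simps)

lemma cross_self [simp]: "cross u u = 0"
  by (simp add: cross_def)

lemma cross_diff_right [simp]: "cross u (v - w) = cross u v - cross u w"
  by (simp add: cross_def algebra_simps)

lemma cross_add_right [simp]: "cross u (v + w) = cross u v + cross u w"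
  by (simp add: cross_def algebra_simps)

lemma hdot_swap: "hdot (prod.swap u) v = cross v u"
  by (simp add: hdot_def cross_def algebra_simps)

lemma swap_hdot_decomposition:
  "prod.swap (hdot \<pi> k *\<^sub>R (snd c, fst c) - hdot \<pi> (snd c, fst c) *\<^sub>R k) = hdot c k *\<^sub>R \<pi>"
  by (simp add: prod_eq_iff hdot_def algebra_simps)

lemma dual_angles_eq:
  "dual_angles \<Omega> \<omega>0 \<omega>0' \<theta> = {\<eta> \<in> conv_domain (antipolar \<Omega>) \<omega>0'.
     hdot (conv_point (antipolar \<Omega>) \<omega>0' \<eta>) (conv_point \<Omega> \<omega>0 \<theta>) = 1}"
  by (simp add: dual_angles_def cosh_conv_def sinh_conv_def hdot_def mult.commute)

lemma obtain_small_factor: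
  fixes c :: real
  assumes "0 < e" "0 \<le> c"
  obtains t where "0 < t" "t < 1" "t * c < e"
proof
  let ?t = "e / (2 * (c + e + 1))"
  have "e * c < e * (2 * (c + e + 1))" using assms by (intro mult_strict_left_mono) auto
  then show "?t * c < e" using assms by (simp add: divide_less_eq)
  show "0 < ?t" using assms by (intro divide_pos_pos) auto
  show "?t < 1" using assms by (simp add: divide_less_eq)
qed

lemma antipolar_scaleR:
  assumes "\<pi> \<in> antipolar \<Omega>" "1 \<le> a"
  shows "a *\<^sub>R \<pi> \<in> antipolar \<Omega>"
proof -
  have "1 \<le> a * hdot \<pi> w" if "w \<in> \<Omega>" for w
    using mult_mono[of 1 a 1 "hdot \<pi> w"] assms that by (auto simp: antipolar_iff)
  then show ?thesis by (simp add: antipolar_iff)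
qed

lemma mem_antipolar_antipolar: "w \<in> \<Omega> \<Longrightarrow> w \<in> antipolar (antipolar \<Omega>)"
  by (auto simp: antipolar_iff hdot_commute)

lemma antipolar_frontier_if_touching:
  assumes \<pi>: "\<pi> \<in> antipolar \<Omega>" and w: "w \<in> \<Omega>" and one: "hdot \<pi> w = 1"
  shows "\<pi> \<in> frontier (antipolar \<Omega>)"
proof -
  have "\<pi> \<notin> interior (antipolar \<Omega>)"
  proof
    assume "\<pi> \<in> interior (antipolar \<Omega>)"
    then obtain e where "e > 0" "ball \<pi> e \<subseteq> antipolar \<Omega>" using mem_interior by blast
    moreover obtain t where "0 < t" "t < 1" "t * norm \<pi> < e"
      by (rule obtain_small_factor[OF \<open>e > 0\<close> norm_ge_zero])
    moreover have "dist \<pi> ((1 - t) *\<^sub>R \<pi>) = t * norm \<pi>"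
      using \<open>0 < t\<close> by (simp add: dist_norm algebra_simps)
    ultimately have "(1 - t) *\<^sub>R \<pi> \<in> antipolar \<Omega>" by auto
    then show False using w one \<open>0 < t\<close> by (auto simp: antipolar_iff)
  qed
  then show ?thesis using \<pi> closure_subset by (auto simp: frontier_def)
qed

lemma hdot_nonneg_on_cone:
  assumes "\<pi> \<in> antipolar \<Omega>" "v \<in> closure (pos_cone \<Omega>)"
  shows "0 \<le> hdot \<pi> v"
proof -
  have "pos_cone \<Omega> \<subseteq> {v. 0 \<le> hdot \<pi> v}"
  proof
    fix x assume "x \<in> pos_cone \<Omega>"
    then obtain t w where x: "x = t *\<^sub>R w" "0 < t" "w \<in> \<Omega>" unfolding pos_cone_def by blast
    have "1 \<le> hdot \<pi> w" using assms(1) x(3) by (simp add: antipolar_iff)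
    then show "x \<in> {v. 0 \<le> hdot \<pi> v}" using x(1,2) by simp
  qed
  then have "closure (pos_cone \<Omega>) \<subseteq> {v. 0 \<le> hdot \<pi> v}"
    by (rule closure_minimal[OF _ closed_hdot_ge(2)])
  then show ?thesis using assms(2) by blast
qed

lemma scaleR_mem_cone:
  assumes "v \<in> closure (pos_cone \<Omega>)" "0 < a"
  shows "a *\<^sub>R v \<in> closure (pos_cone \<Omega>)"
proof -
  have "a *\<^sub>R (t *\<^sub>R w) \<in> pos_cone \<Omega>" if "0 < t" "w \<in> \<Omega>" for t w
    unfolding pos_cone_def using that assms(2) by (intro CollectI exI[of _ "a * t"] exI[of _ w]) auto
  then have "(*\<^sub>R) a ` pos_cone \<Omega> \<subseteq> pos_cone \<Omega>"
    unfolding pos_cone_def by blast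
  then have "closure ((*\<^sub>R) a ` pos_cone \<Omega>) \<subseteq> closure (pos_cone \<Omega>)"
    by (rule closure_mono)
  then have "(*\<^sub>R) a ` closure (pos_cone \<Omega>) \<subseteq> closure (pos_cone \<Omega>)"
    by (simp add: closure_scaleR)
  then show ?thesis using assms(1) by blast
qed

lemma not_interior_if_hdot_zero:
  assumes nonneg: "\<And>u. u \<in> C \<Longrightarrow> 0 \<le> hdot \<pi> u" and "\<pi> \<noteq> 0" and zero: "hdot \<pi> v = 0"
  shows "v \<notin> interior C"
proof
  assume "v \<in> interior C"
  then obtain e where "e > 0" "ball v e \<subseteq> C" using mem_interior by blast
  define z where "z = (fst \<pi>, - snd \<pi>)"
  have "hdot \<pi> z = (norm \<pi>)\<^sup>2" "norm z = norm \<pi>"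
    by (simp_all add: z_def hdot_def norm_prod_def power2_eq_square)
  obtain t where "0 < t" "t < 1" "t * norm z < e"
    by (rule obtain_small_factor[OF \<open>e > 0\<close> norm_ge_zero])
  then have "v - t *\<^sub>R z \<in> ball v e" by (simp add: dist_norm)
  then have "v - t *\<^sub>R z \<in> C" using \<open>ball v e \<subseteq> C\<close> by blast
  moreover have "0 < t * (norm \<pi>)\<^sup>2" using \<open>0 < t\<close> \<open>\<pi> \<noteq> 0\<close> by simp
  then have "hdot \<pi> (v - t *\<^sub>R z) < 0"
    using zero \<open>hdot \<pi> z = (norm \<pi>)\<^sup>2\<close> by simp
  ultimately show False using nonneg[of "v - t *\<^sub>R z"] by linarith
qed

lemma setdist_ray_nonzero_if_hdot_zero:
  assumes \<pi>: "\<pi> \<in> antipolar \<Omega>" and "\<Omega> \<noteq> {}" and zero: "hdot \<pi> u = 0"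
  shows "setdist (ray u) \<Omega> \<noteq> 0"
proof
  assume "setdist (ray u) \<Omega> = 0"
  then have "setdist (ray u) \<Omega> < 1 / (norm \<pi> + 1)" by (simp add: add_nonneg_pos)
  moreover have "u \<in> ray u" unfolding ray_def by (intro CollectI exI[of _ 1]) simp
  ultimately obtain x y where xy: "x \<in> ray u" "y \<in> \<Omega>" "dist x y < 1 / (norm \<pi> + 1)"
    using setdist_ltE \<open>\<Omega> \<noteq> {}\<close> by blast
  have "hdot \<pi> x = 0" using xy(1) zero by (auto simp: ray_def)
  then have "hdot \<pi> y \<le> norm \<pi> * dist x y"
    using hdot_le_norm[of \<pi> "y - x"] by (simp add: dist_norm norm_minus_commute)
  also have "\<dots> \<le> norm \<pi> / (norm \<pi> + 1)"
    using xy(3) mult_left_mono[of "dist x y" "1 / (norm \<pi> + 1)" "norm \<pi>"] by simp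
  also have "\<dots> < 1"
    by (simp add: add_nonneg_pos divide_less_eq)
  finally have "hdot \<pi> y < 1" .
  moreover have "1 \<le> hdot \<pi> y" using \<pi> xy(2) by (simp add: antipolar_iff)
  ultimately show False by linarith
qed

(* A zero of hdot pi on the closed cone spanned by Omega lies on one of its boundary rays, which
   prop_2star puts at distance 0 from Omega, where hdot pi >= 1. *)
lemma hdot_pos_on_cone:
  assumes "prop_2star \<Omega>" and \<pi>: "\<pi> \<in> antipolar \<Omega>"
    and v: "v \<in> closure (pos_cone \<Omega>)" "v \<noteq> 0"
  shows "0 < hdot \<pi> v"
proof (rule ccontr)
  assume "\<not> 0 < hdot \<pi> v"
  then have zero: "hdot \<pi> v = 0" using hdot_nonneg_on_cone[OF \<pi> v(1)] by simp
  obtain u0 u1 where u: "frontier (closure (pos_cone \<Omega>)) = ray u0 \<union> ray u1"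
    "setdist (ray u0) \<Omega> = 0" "setdist (ray u1) \<Omega> = 0"
    using assms(1) by (auto simp: prop_2star_def)
  have "\<Omega> \<noteq> {}" using v(1) by (auto simp: pos_cone_def)
  then have "\<pi> \<noteq> 0" using \<pi> by (auto simp: antipolar_iff)
  then have "v \<notin> interior (closure (pos_cone \<Omega>))"
    using not_interior_if_hdot_zero hdot_nonneg_on_cone[OF \<pi>] zero by blast
  then have "v \<in> frontier (closure (pos_cone \<Omega>))" using v(1) by (simp add: frontier_def)
  then have "v \<in> ray u0 \<union> ray u1" using u(1) by simp
  then obtain u t where "setdist (ray u) \<Omega> = 0" "v = t *\<^sub>R u"
    using u(2,3) unfolding ray_def by blast
  moreover have "hdot \<pi> u = 0" using zero v(2) calculation(2) by simp
  ultimately show False using setdist_ray_nonzero_if_hdot_zero[OF \<pi> \<open>\<Omega> \<noteq> {}\<close>] by blast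
qed

lemma hdot_ge_norm_on_cone:
  assumes "prop_2star \<Omega>" and \<pi>: "\<pi> \<in> antipolar \<Omega>"
  obtains \<delta> where "0 < \<delta>" "\<And>v. v \<in> closure (pos_cone \<Omega>) \<Longrightarrow> \<delta> * norm v \<le> hdot \<pi> v"
proof -
  define S where "S = closure (pos_cone \<Omega>) \<inter> sphere 0 1"
  have "\<exists>\<delta>>0. \<forall>u\<in>S. \<delta> \<le> hdot \<pi> u"
  proof (cases "S = {}")
    case False
    have "compact S" unfolding S_def by (intro closed_Int_compact) auto
    moreover have "continuous_on S (hdot \<pi>)" unfolding hdot_def by (intro continuous_intros)
    ultimately obtain u0 where u0: "u0 \<in> S" "\<And>u. u \<in> S \<Longrightarrow> hdot \<pi> u0 \<le> hdot \<pi> u"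
      using continuous_attains_inf[OF _ False] by blast
    moreover have "u0 \<in> closure (pos_cone \<Omega>)" "u0 \<noteq> 0" using u0(1) by (auto simp: S_def)
    then have "0 < hdot \<pi> u0" by (rule hdot_pos_on_cone[OF assms])
    ultimately show ?thesis by blast
  qed (intro exI[of _ 1], simp)
  then obtain \<delta> where "0 < \<delta>" and \<delta>: "\<And>u. u \<in> S \<Longrightarrow> \<delta> \<le> hdot \<pi> u" by blast
  have bound: "\<delta> * norm v \<le> hdot \<pi> v" if v: "v \<in> closure (pos_cone \<Omega>)" for v
  proof (cases "v = 0")
    case False
    then have "(1 / norm v) *\<^sub>R v \<in> S"
      unfolding S_def using scaleR_mem_cone[OF v, of "1 / norm v"] by simp
    then have "\<delta> \<le> hdot \<pi> ((1 / norm v) *\<^sub>R v)" by (rule \<delta>)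
    then have "\<delta> \<le> hdot \<pi> v / norm v" by simp
    then show ?thesis using False by (simp add: le_divide_eq mult.commute)
  qed simp
  show ?thesis by (rule that[OF \<open>0 < \<delta>\<close> bound])
qed

lemma scaleR_antipolar_in_interior:
  assumes "prop_2star \<Omega>" and \<pi>: "\<pi> \<in> antipolar \<Omega>" and "1 < a"
  shows "a *\<^sub>R \<pi> \<in> interior (antipolar \<Omega>)"
proof -
  obtain \<delta> where "0 < \<delta>" and \<delta>: "\<And>v. v \<in> closure (pos_cone \<Omega>) \<Longrightarrow> \<delta> * norm v \<le> hdot \<pi> v"
    using hdot_ge_norm_on_cone[OF assms(1,2)] by blast
  have hdot_ge: "1 \<le> hdot \<pi>' w" if \<pi>': "norm (\<pi>' - a *\<^sub>R \<pi>) < (a - 1) * \<delta>" and w: "w \<in> \<Omega>" for \<pi>' w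
  proof -
    have "w \<in> pos_cone \<Omega>"
      unfolding pos_cone_def using w by (intro CollectI exI[of _ 1] exI[of _ w]) simp
    then have "\<delta> * norm w \<le> hdot \<pi> w" using \<delta> closure_subset by blast
    then have "(a - 1) * (\<delta> * norm w) \<le> (a - 1) * hdot \<pi> w"
      using \<open>1 < a\<close> by (intro mult_left_mono) simp_all
    then have "(a - 1) * (\<delta> * norm w) \<le> a * hdot \<pi> w - hdot \<pi> w"
      by (simp add: left_diff_distrib)
    moreover have "norm (\<pi>' - a *\<^sub>R \<pi>) * norm w \<le> (a - 1) * \<delta> * norm w"
      using \<pi>' by (intro mult_right_mono) simp_all
    then have "\<bar>hdot (\<pi>' - a *\<^sub>R \<pi>) w\<bar> \<le> (a - 1) * (\<delta> * norm w)"
      using hdot_le_norm[of "\<pi>' - a *\<^sub>R \<pi>" w] by (simp add: mult.assoc)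
    moreover have "hdot \<pi>' w = a * hdot \<pi> w + hdot (\<pi>' - a *\<^sub>R \<pi>) w" by simp
    moreover have "1 \<le> hdot \<pi> w" using \<pi> w by (simp add: antipolar_iff)
    ultimately show ?thesis unfolding abs_le_iff by linarith
  qed
  have "ball (a *\<^sub>R \<pi>) ((a - 1) * \<delta>) \<subseteq> antipolar \<Omega>"
  proof
    fix \<pi>' assume "\<pi>' \<in> ball (a *\<^sub>R \<pi>) ((a - 1) * \<delta>)"
    then have "norm (\<pi>' - a *\<^sub>R \<pi>) < (a - 1) * \<delta>" by (simp add: dist_norm norm_minus_commute)
    then show "\<pi>' \<in> antipolar \<Omega>" using hdot_ge by (simp add: antipolar_iff)
  qed
  moreover have "0 < (a - 1) * \<delta>" using \<open>1 < a\<close> \<open>0 < \<delta>\<close> by simp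
  ultimately show ?thesis unfolding mem_interior by blast
qed

section \<open>Parametrisation of the boundary by the angle\<close>

(* Instantiated both with (Omega, omega0, omega0') and with (antipolar Omega, omega0', omega0). *)
locale convex_trig_domain =
  fixes K :: "(real \<times> real) set" and k0 c :: "real \<times> real"
  assumes convex_K: "convex K" and closed_K: "closed K"
    and expanding: "\<And>w a. w \<in> K \<Longrightarrow> 1 < a \<Longrightarrow> a *\<^sub>R w \<in> K"
    and scaled_not_frontier: "\<And>w a. w \<in> K \<Longrightarrow> 1 < a \<Longrightarrow> a *\<^sub>R w \<notin> frontier K"
    and base_frontier: "k0 \<in> frontier K"
    and dual_base: "c \<in> antipolar K"
    and base_pairing: "hdot c k0 = 1"
begin

definition line_dir :: "real \<times> real" where
  "line_dir = (snd c, fst c)"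

definition line_pt :: "real \<Rightarrow> real \<times> real" where
  "line_pt s = k0 + s *\<^sub>R line_dir"

definition params :: "real set" where
  "params = {s. \<exists>t>0. t *\<^sub>R line_pt s \<in> K}"

definition radius :: "real \<Rightarrow> real" where
  "radius s = Inf {t. 0 < t \<and> t *\<^sub>R line_pt s \<in> K}"

(* cogauge s is the largest lambda with line_pt s in lambda K. *)
definition cogauge :: "real \<Rightarrow> real" where
  "cogauge s = inverse (radius s)"

definition bpoint :: "real \<Rightarrow> real \<times> real" where
  "bpoint s = radius s *\<^sub>R line_pt s"

lemma hdot_dual_base_ge: "w \<in> K \<Longrightarrow> 1 \<le> hdot c w"
  using dual_base by (simp add: antipolar_iff)

lemma base_pairing_coords: "fst c * fst k0 - snd c * snd k0 = 1"
  using base_pairing by (simp add: hdot_def)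

lemma hdot_line_dir [simp]: "hdot c line_dir = 0"
  by (simp add: hdot_def line_dir_def)

lemma hdot_line_pt [simp]: "hdot c (line_pt s) = 1"
  using base_pairing by (simp add: line_pt_def)

lemma cross_line_pt [simp]: "cross k0 (line_pt s) = s"
proof -
  have "cross k0 (line_pt s) = s * (fst c * fst k0 - snd c * snd k0)"
    by (simp add: cross_def line_pt_def line_dir_def algebra_simps)
  then show ?thesis using base_pairing_coords by simp
qed

lemma cross_line_pt_line_pt: "cross (line_pt s0) (line_pt s1) = s1 - s0"
proof -
  have "cross (line_pt s0) (line_pt s1) = (s1 - s0) * (fst c * fst k0 - snd c * snd k0)"
    by (simp add: cross_def line_pt_def line_dir_def algebra_simps)
  then show ?thesis using base_pairing_coords by simp
qed

lemma line_pt_affine: "u + v = 1 \<Longrightarrow> u *\<^sub>R line_pt s1 + v *\<^sub>R line_pt s2 = line_pt (u * s1 + v * s2)"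
  by (simp add: line_pt_def algebra_simps flip: scaleR_add_left)

lemma line_pt_nonzero: "line_pt s \<noteq> 0"
  using hdot_line_pt[of s] by (auto simp del: hdot_line_pt)

lemma eq_scaleR_line_pt:
  assumes "hdot c w \<noteq> 0"
  shows "w = hdot c w *\<^sub>R line_pt (cross k0 w / hdot c w)"
proof -
  have "hdot c w *\<^sub>R line_pt (cross k0 w / hdot c w) = hdot c w *\<^sub>R k0 + cross k0 w *\<^sub>R line_dir"
    using assms by (simp add: line_pt_def scaleR_add_right)
  also have "\<dots> = (fst c * fst k0 - snd c * snd k0) *\<^sub>R w"
    by (simp add: prod_eq_iff hdot_def cross_def line_dir_def algebra_simps)
  finally show ?thesis using base_pairing_coords by simp
qed

lemma one_le_if_scaleR_line_pt_in_K: "t *\<^sub>R line_pt s \<in> K \<Longrightarrow> 1 \<le> t"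
  using hdot_dual_base_ge[of "t *\<^sub>R line_pt s"] by simp

lemma closed_ray_hits: "closed {t. 0 < t \<and> t *\<^sub>R line_pt s \<in> K}"
proof -
  have eq: "{t. 0 < t \<and> t *\<^sub>R line_pt s \<in> K} = {t. 1 \<le> t} \<inter> (\<lambda>t. t *\<^sub>R line_pt s) -` K"
    using one_le_if_scaleR_line_pt_in_K by force
  show ?thesis unfolding eq
    by (intro closed_Int closed_Collect_le continuous_closed_vimage closed_K continuous_intros)
qed

lemma bpoint_in_K_radius_ge_one:
  assumes "s \<in> params"
  shows bpoint_in_K: "bpoint s \<in> K" and radius_ge_one: "1 \<le> radius s"
proof -
  have "{t. 0 < t \<and> t *\<^sub>R line_pt s \<in> K} \<noteq> {}" using assms by (auto simp: params_def)
  then have "radius s \<in> {t. 0 < t \<and> t *\<^sub>R line_pt s \<in> K}"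
    unfolding radius_def by (rule closed_contains_Inf[OF _ _ closed_ray_hits]) (auto intro: bdd_belowI[of _ 0])
  then show "bpoint s \<in> K" "1 \<le> radius s"
    by (auto simp: bpoint_def intro: one_le_if_scaleR_line_pt_in_K)
qed

lemma radius_pos: "s \<in> params \<Longrightarrow> 0 < radius s"
  using radius_ge_one by (rule less_le_trans[OF zero_less_one])

lemma radius_le: "0 < t \<Longrightarrow> t *\<^sub>R line_pt s \<in> K \<Longrightarrow> radius s \<le> t"
  unfolding radius_def by (rule cInf_lower) (auto intro: bdd_belowI[of _ 0])

lemma scaleR_line_pt_in_K_iff:
  assumes "0 < t"
  shows "t *\<^sub>R line_pt s \<in> K \<longleftrightarrow> s \<in> params \<and> radius s \<le> t"
proof
  assume "t *\<^sub>R line_pt s \<in> K"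
  then show "s \<in> params \<and> radius s \<le> t" using assms radius_le by (auto simp: params_def)
next
  assume "s \<in> params \<and> radius s \<le> t"
  then have s: "s \<in> params" "radius s \<le> t" by auto
  show "t *\<^sub>R line_pt s \<in> K"
  proof (cases "t = radius s")
    case False
    then have "1 < t / radius s" using s radius_pos[of s] by (simp add: field_simps)
    from expanding[OF bpoint_in_K[OF s(1)] this] show ?thesis using s radius_pos[of s] by (simp add: bpoint_def)
  qed (use s bpoint_in_K in \<open>simp add: bpoint_def\<close>)
qed

lemma hdot_bpoint [simp]: "hdot c (bpoint s) = radius s"
  by (simp add: bpoint_def)

lemma cross_bpoint [simp]: "cross k0 (bpoint s) = radius s * s"
  by (simp add: bpoint_def)

lemma bpoint_eq_inverse_cogauge: "bpoint s = inverse (cogauge s) *\<^sub>R line_pt s"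
  by (simp add: bpoint_def cogauge_def)

lemma cogauge_pos: "s \<in> params \<Longrightarrow> 0 < cogauge s"
  using radius_pos by (simp add: cogauge_def)

lemma bpoint_frontier:
  assumes "s \<in> params"
  shows "bpoint s \<in> frontier K"
proof -
  have "bpoint s \<notin> interior K"
  proof
    assume "bpoint s \<in> interior K"
    then obtain e where "e > 0" "ball (bpoint s) e \<subseteq> K" using mem_interior by blast
    moreover obtain t where t: "0 < t" "t < 1" "t * norm (line_pt s) < e"
      by (rule obtain_small_factor[OF \<open>e > 0\<close> norm_ge_zero])
    moreover have "dist (bpoint s) ((radius s - t) *\<^sub>R line_pt s) = t * norm (line_pt s)"
      using t by (simp add: bpoint_def dist_norm algebra_simps)
    ultimately have "(radius s - t) *\<^sub>R line_pt s \<in> K" by auto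
    moreover have "0 < radius s - t" using radius_ge_one[OF assms] t by simp
    ultimately show False using radius_le t(1) by fastforce
  qed
  then show ?thesis using bpoint_in_K[OF assms] closure_subset by (auto simp: frontier_def)
qed

lemma obtain_bpoint_of_frontier:
  assumes "w \<in> frontier K"
  obtains s where "s \<in> params" "w = bpoint s"
proof -
  have wK: "w \<in> K" using assms closed_K frontier_subset_closed by blast
  define t s where "t = hdot c w" and "s = cross k0 w / hdot c w"
  have t1: "1 \<le> t" using hdot_dual_base_ge[OF wK] by (simp add: t_def)
  have w: "w = t *\<^sub>R line_pt s" unfolding s_def t_def using t1 t_def by (intro eq_scaleR_line_pt) simp
  then have s: "s \<in> params" "radius s \<le> t" using scaleR_line_pt_in_K_iff[of t s] t1 wK by auto
  have "t = radius s"
  proof (rule ccontr)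
    assume "t \<noteq> radius s"
    then have "1 < t / radius s" using s radius_pos[of s] by (simp add: field_simps)
    from scaled_not_frontier[OF bpoint_in_K[OF s(1)] this] show False
      using assms w radius_pos[OF s(1)] by (simp add: bpoint_def)
  qed
  then show ?thesis using that[OF s(1)] w by (simp add: bpoint_def)
qed

lemma frontier_K_eq: "frontier K = bpoint ` params"
  using bpoint_frontier obtain_bpoint_of_frontier by blast

lemma params_convex_combination:
  assumes "s1 \<in> params" "s2 \<in> params" "0 \<le> u" "0 \<le> v" "u + v = 1"
  shows "u * s1 + v * s2 \<in> params \<and> u * cogauge s1 + v * cogauge s2 \<le> cogauge (u * s1 + v * s2)"
proof -
  define h1 h2 where "h1 = cogauge s1" and "h2 = cogauge s2"
  have h: "0 < h1" "0 < h2" using cogauge_pos assms by (auto simp: h1_def h2_def)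
  have den: "0 < u * h1 + v * h2"
    using assms(3-5) h by (cases "u = 0") (simp_all add: add_pos_nonneg)
  define k where "k = 1 / (u * h1 + v * h2)"
  have k: "0 < k" using den by (simp add: k_def)
  define lam mu where "lam = k * u * h1" and "mu = k * v * h2"
  have "lam + mu = k * (u * h1 + v * h2)" by (simp add: lam_def mu_def algebra_simps)
  then have lm: "0 \<le> lam" "0 \<le> mu" "lam + mu = 1"
    using k h assms den by (simp_all add: lam_def mu_def k_def)
  have "lam *\<^sub>R bpoint s1 + mu *\<^sub>R bpoint s2 \<in> K"
    using convex_K bpoint_in_K assms lm unfolding convex_def by blast
  moreover have "lam * inverse h1 = k * u" "mu * inverse h2 = k * v"
    using h by (simp_all add: lam_def mu_def)
  then have "lam *\<^sub>R bpoint s1 + mu *\<^sub>R bpoint s2 = k *\<^sub>R (u *\<^sub>R line_pt s1 + v *\<^sub>R line_pt s2)"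
    by (simp add: bpoint_eq_inverse_cogauge scaleR_add_right flip: h1_def h2_def)
  ultimately have "k *\<^sub>R line_pt (u * s1 + v * s2) \<in> K" using line_pt_affine[OF assms(5)] by simp
  then have "u * s1 + v * s2 \<in> params" "radius (u * s1 + v * s2) \<le> k"
    using scaleR_line_pt_in_K_iff k by auto
  moreover have "1 / k \<le> cogauge (u * s1 + v * s2)"
    using calculation radius_pos[OF calculation(1)] unfolding cogauge_def inverse_eq_divide
    by (intro divide_left_mono) auto
  ultimately show ?thesis using den by (simp add: k_def h1_def h2_def)
qed

lemma convex_params: "convex params"
  unfolding convex_def using params_convex_combination by simp

lemma concave_cogauge: "concave_on params cogauge"
  unfolding concave_on_def convex_on_def
  using convex_params params_convex_combination by fastforce

lemma zero_in_params: "0 \<in> params"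
proof -
  obtain s where s: "s \<in> params" "k0 = bpoint s" by (rule obtain_bpoint_of_frontier[OF base_frontier])
  then have "radius s * s = 0" by (metis cross_bpoint cross_self)
  then have "s = 0" using radius_pos[OF s(1)] by simp
  then show ?thesis using s by simp
qed

lemma open_params: "open params"
  unfolding open_contains_ball
proof (intro ballI)
  \<comment> \<open>otherwise 2 *R bpoint s is a limit of points outside K, so it lies on the frontier,
    contradicting prop_star\<close>
  fix s assume s: "s \<in> params"
  show "\<exists>e>0. ball s e \<subseteq> params"
  proof (rule ccontr)
    assume no_ball: "\<not> (\<exists>e>0. ball s e \<subseteq> params)"
    have "2 *\<^sub>R bpoint s \<notin> interior K"
    proof
      assume "2 *\<^sub>R bpoint s \<in> interior K"
      then obtain e where "e > 0" and e: "ball (2 *\<^sub>R bpoint s) e \<subseteq> K" using mem_interior by blast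
      obtain t where t: "0 < t" "t * (2 * radius s * norm line_dir) < e"
        using obtain_small_factor[OF \<open>e > 0\<close>, of "2 * radius s * norm line_dir"] radius_pos[OF s]
        by (metis mult_nonneg_nonneg norm_ge_zero order_less_imp_le zero_le_numeral)
      obtain s' where s': "s' \<in> ball s t" "s' \<notin> params" using no_ball t(1) by blast
      have "(2 * radius s) *\<^sub>R line_pt s' - 2 *\<^sub>R bpoint s = (2 * radius s * (s' - s)) *\<^sub>R line_dir"
        by (simp add: bpoint_def line_pt_def algebra_simps)
      then have "dist ((2 * radius s) *\<^sub>R line_pt s') (2 *\<^sub>R bpoint s) = 2 * radius s * \<bar>s' - s\<bar> * norm line_dir"
        using radius_pos[OF s] by (simp add: dist_norm abs_mult)
      also have "\<dots> \<le> 2 * radius s * t * norm line_dir"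
        using s' radius_pos[OF s] by (intro mult_right_mono mult_left_mono) (auto simp: dist_real_def abs_minus_commute)
      also have "\<dots> < e" using t(2) by (simp add: mult_ac)
      finally have "(2 * radius s) *\<^sub>R line_pt s' \<in> K" using e by (auto simp: dist_commute)
      then show False using s' scaleR_line_pt_in_K_iff radius_pos[OF s] by simp
    qed
    moreover have "2 *\<^sub>R bpoint s \<in> K" using expanding[OF bpoint_in_K[OF s]] by simp
    ultimately have "2 *\<^sub>R bpoint s \<in> frontier K" using closure_subset by (auto simp: frontier_def)
    then show False using scaled_not_frontier[OF bpoint_in_K[OF s]] by simp
  qed
qed

sublocale cg: open_concave params cogauge
  by unfold_locales (simp_all add: open_params convex_params concave_cogauge)

lemma continuous_on_radius: "continuous_on params radius"
proof -
  have "continuous_on params (\<lambda>s. inverse (cogauge s))"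
    using cogauge_pos by (intro continuous_on_inverse cg.continuous_on) force
  then show ?thesis by (simp add: cogauge_def)
qed

definition sector_region :: "real \<Rightarrow> real \<Rightarrow> (real \<times> real) set" where
  "sector_region s0 s1 = {t *\<^sub>R line_pt \<sigma> | t \<sigma>. \<sigma> \<in> {s0..s1} \<and> 0 \<le> t \<and> t \<le> radius \<sigma>}"

definition sector_area :: "real \<Rightarrow> real \<Rightarrow> real" where
  "sector_area s0 s1 = measure lebesgue (sector_region s0 s1)"

definition angle :: "real \<Rightarrow> real" where
  "angle s = (if 0 \<le> s then 2 * sector_area 0 s else - 2 * sector_area s 0)"

lemma interval_subset_params:
  assumes "s0 \<in> params" "s1 \<in> params"
  shows "{s0..s1} \<subseteq> params"
proof
  fix y assume "y \<in> {s0..s1}"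
  then show "y \<in> params" using cg.mem_I_between[OF assms] by simp
qed

lemma sector_region_eq_image:
  assumes "{s0..s1} \<subseteq> params"
  shows "sector_region s0 s1 = (\<lambda>(a, \<sigma>). (a * radius \<sigma>) *\<^sub>R line_pt \<sigma>) ` ({0..1} \<times> {s0..s1})"
proof (intro equalityI subsetI)
  fix x assume "x \<in> sector_region s0 s1"
  then obtain t \<sigma> where x: "x = t *\<^sub>R line_pt \<sigma>" "\<sigma> \<in> {s0..s1}" "0 \<le> t" "t \<le> radius \<sigma>"
    unfolding sector_region_def by blast
  have r: "0 < radius \<sigma>" using radius_pos assms x(2) by blast
  then have "x = (\<lambda>(a, \<sigma>). (a * radius \<sigma>) *\<^sub>R line_pt \<sigma>) (t / radius \<sigma>, \<sigma>)"
    using x(1) by simp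
  moreover have "(t / radius \<sigma>, \<sigma>) \<in> {0..1} \<times> {s0..s1}" using x(2-4) r by simp
  ultimately show "x \<in> (\<lambda>(a, \<sigma>). (a * radius \<sigma>) *\<^sub>R line_pt \<sigma>) ` ({0..1} \<times> {s0..s1})"
    by (rule image_eqI)
next
  fix x assume "x \<in> (\<lambda>(a, \<sigma>). (a * radius \<sigma>) *\<^sub>R line_pt \<sigma>) ` ({0..1} \<times> {s0..s1})"
  then obtain a \<sigma> where x: "x = (a * radius \<sigma>) *\<^sub>R line_pt \<sigma>" "a \<in> {0..1}" "\<sigma> \<in> {s0..s1}"
    by auto
  have "0 < radius \<sigma>" using radius_pos assms x(3) by blast
  then have "0 \<le> a * radius \<sigma>" "a * radius \<sigma> \<le> radius \<sigma>" using x(2) by (simp_all add: mult_left_le_one_le)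
  then show "x \<in> sector_region s0 s1" using x unfolding sector_region_def by blast
qed

lemma sector_region_lmeasurable:
  assumes "{s0..s1} \<subseteq> params"
  shows "sector_region s0 s1 \<in> lmeasurable"
proof -
  have "continuous_on ({0..1} \<times> {s0..s1}) (\<lambda>x. radius (snd x))"
    using assms by (intro continuous_on_compose2[OF continuous_on_radius continuous_on_snd]) auto
  then have "continuous_on ({0..1} \<times> {s0..s1}) (\<lambda>(a, \<sigma>). (a * radius \<sigma>) *\<^sub>R line_pt \<sigma>)"
    unfolding line_pt_def case_prod_beta by (intro continuous_intros) auto
  then have "compact (sector_region s0 s1)"
    unfolding sector_region_eq_image[OF assms] by (intro compact_continuous_image compact_Times) auto
  then show ?thesis by (rule lmeasurable_compact)
qed

lemma measure_triangle_line_pts: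
  assumes "s0 \<le> s1"
  shows "measure lebesgue (convex hull {0, M *\<^sub>R line_pt s0, M *\<^sub>R line_pt s1}) = M\<^sup>2 * (s1 - s0) / 2"
proof -
  have "\<bar>cross (M *\<^sub>R line_pt s0) (M *\<^sub>R line_pt s1)\<bar> = M\<^sup>2 * (s1 - s0)"
    using assms by (simp add: cross_line_pt_line_pt power2_eq_square abs_mult)
  then show ?thesis by (simp add: measure_triangle_origin)
qed

lemma sector_region_subset_triangle:
  assumes "s0 \<le> s1" "0 < M" "\<And>\<sigma>. \<sigma> \<in> {s0..s1} \<Longrightarrow> radius \<sigma> \<le> M"
  shows "sector_region s0 s1 \<subseteq> convex hull {0, M *\<^sub>R line_pt s0, M *\<^sub>R line_pt s1}"
proof
  fix x assume "x \<in> sector_region s0 s1"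
  then obtain t \<sigma> where x: "x = t *\<^sub>R line_pt \<sigma>" "\<sigma> \<in> {s0..s1}" "0 \<le> t" "t \<le> radius \<sigma>"
    unfolding sector_region_def by blast
  define l where "l = (if s1 = s0 then 0 else (\<sigma> - s0) / (s1 - s0))"
  have l: "0 \<le> l" "l \<le> 1" "(1 - l) * s0 + l * s1 = \<sigma>"
    using x(2) assms(1) by (auto simp: l_def field_simps)
  have tM: "0 \<le> t / M" "t / M \<le> 1" using x(3,4) assms(2) assms(3)[OF x(2)] by auto
  have "(t / M * (1 - l)) *\<^sub>R (M *\<^sub>R line_pt s0) + (t / M * l) *\<^sub>R (M *\<^sub>R line_pt s1)
      = t *\<^sub>R ((1 - l) *\<^sub>R line_pt s0 + l *\<^sub>R line_pt s1)"
    using assms(2) by (simp add: scaleR_add_right)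
  also have "\<dots> = x" using l by (simp add: line_pt_affine x(1))
  finally have "x = (1 - t / M) *\<^sub>R 0 + (t / M * (1 - l)) *\<^sub>R (M *\<^sub>R line_pt s0) + (t / M * l) *\<^sub>R (M *\<^sub>R line_pt s1)"
    by simp
  moreover have "0 \<le> t / M * (1 - l)" "0 \<le> t / M * l" using tM l by (simp_all only: mult_nonneg_nonneg diff_ge_0_iff_ge)
  moreover have "(1 - t / M) + t / M * (1 - l) + t / M * l = 1" by (simp add: algebra_simps add_divide_distrib[symmetric])
  ultimately show "x \<in> convex hull {0, M *\<^sub>R line_pt s0, M *\<^sub>R line_pt s1}"
    unfolding convex_hull_3 using tM(2) by (intro CollectI exI[of _ "1 - t / M"] exI[of _ "t / M * (1 - l)"] exI[of _ "t / M * l"]) simp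
qed

lemma triangle_subset_sector_region:
  assumes "s0 \<le> s1" "0 \<le> m" "\<And>\<sigma>. \<sigma> \<in> {s0..s1} \<Longrightarrow> m \<le> radius \<sigma>"
  shows "convex hull {0, m *\<^sub>R line_pt s0, m *\<^sub>R line_pt s1} \<subseteq> sector_region s0 s1"
proof
  fix x assume "x \<in> convex hull {0, m *\<^sub>R line_pt s0, m *\<^sub>R line_pt s1}"
  then obtain u v w where x: "x = u *\<^sub>R 0 + v *\<^sub>R (m *\<^sub>R line_pt s0) + w *\<^sub>R (m *\<^sub>R line_pt s1)"
    "0 \<le> u" "0 \<le> v" "0 \<le> w" "u + v + w = 1"
    unfolding convex_hull_3 by blast
  show "x \<in> sector_region s0 s1"
  proof (cases "v + w = 0")
    case True
    then have "v = 0" "w = 0" using x by auto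
    then have "x = 0 *\<^sub>R line_pt s0" using x by simp
    moreover have "0 \<le> radius s0" using assms(1,2) assms(3)[of s0] by simp
    ultimately show ?thesis unfolding sector_region_def using assms(1) by fastforce
  next
    case False
    then have vw: "0 < v + w" using x by simp
    define l where "l = w / (v + w)"
    define \<sigma> where "\<sigma> = (1 - l) * s0 + l * s1"
    have l: "0 \<le> l" "l \<le> 1" "v / (v + w) = 1 - l" using vw x by (auto simp: l_def field_simps)
    have "x = (m * (v + w)) *\<^sub>R ((v / (v + w)) *\<^sub>R line_pt s0 + (w / (v + w)) *\<^sub>R line_pt s1)"
      using x vw by (simp add: scaleR_add_right mult.commute)
    also have "(v / (v + w)) *\<^sub>R line_pt s0 + (w / (v + w)) *\<^sub>R line_pt s1 = line_pt \<sigma>"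
      unfolding \<sigma>_def l(3) l_def[symmetric] by (rule line_pt_affine) simp
    finally have "x = (m * (v + w)) *\<^sub>R line_pt \<sigma>" .
    moreover have \<sigma>: "\<sigma> \<in> {s0..s1}"
    proof -
      have "\<sigma> = s0 + l * (s1 - s0)" by (simp add: \<sigma>_def algebra_simps)
      moreover have "l * (s1 - s0) \<le> s1 - s0" using assms(1) l(1,2) by (intro mult_left_le_one_le) simp_all
      ultimately show ?thesis using assms(1) l(1) by simp
    qed
    moreover have "m * (v + w) \<le> m" using x assms(2) by (intro mult_left_le) auto
    then have "m * (v + w) \<le> radius \<sigma>" using assms(3)[OF \<sigma>] by linarith
    moreover have "0 \<le> m * (v + w)" using assms(2) vw by simp
    ultimately show ?thesis unfolding sector_region_def by blast
  qed
qed

lemma sector_area_lower: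
  assumes "{s0..s1} \<subseteq> params" "s0 \<le> s1" "0 \<le> m" "\<And>\<sigma>. \<sigma> \<in> {s0..s1} \<Longrightarrow> m \<le> radius \<sigma>"
  shows "m\<^sup>2 * (s1 - s0) / 2 \<le> sector_area s0 s1"
proof -
  have "measure lebesgue (convex hull {0, m *\<^sub>R line_pt s0, m *\<^sub>R line_pt s1}) \<le> sector_area s0 s1"
    unfolding sector_area_def
    by (rule measure_mono_fmeasurable[OF triangle_subset_sector_region[OF assms(2-4)]
          fmeasurableD[OF triangle_fmeasurable] sector_region_lmeasurable[OF assms(1)]])
  then show ?thesis using measure_triangle_line_pts[OF assms(2)] by simp
qed

lemma sector_area_upper:
  assumes "{s0..s1} \<subseteq> params" "s0 \<le> s1" "\<And>\<sigma>. \<sigma> \<in> {s0..s1} \<Longrightarrow> radius \<sigma> \<le> M"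
  shows "sector_area s0 s1 \<le> M\<^sup>2 * (s1 - s0) / 2"
proof -
  have "0 < M" using assms(1,2) assms(3)[of s0] radius_ge_one[of s0] by auto
  have "sector_area s0 s1 \<le> measure lebesgue (convex hull {0, M *\<^sub>R line_pt s0, M *\<^sub>R line_pt s1})"
    unfolding sector_area_def
    by (rule measure_mono_fmeasurable[OF sector_region_subset_triangle[OF assms(2) \<open>0 < M\<close> assms(3)]
          fmeasurableD[OF sector_region_lmeasurable[OF assms(1)]] triangle_fmeasurable])
  then show ?thesis using measure_triangle_line_pts[OF assms(2)] by simp
qed

lemma sector_area_add:
  assumes "s0 \<in> params" "s2 \<in> params" "s0 \<le> s1" "s1 \<le> s2"
  shows "sector_area s0 s2 = sector_area s0 s1 + sector_area s1 s2"
proof -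
  have s1: "s1 \<in> params" using interval_subset_params[OF assms(1,2)] assms(3,4) by auto
  have "sector_region s0 s1 \<inter> sector_region s1 s2 \<subseteq> span {line_pt s1}"
  proof
    fix x assume "x \<in> sector_region s0 s1 \<inter> sector_region s1 s2"
    then obtain t \<sigma> t' \<sigma>' where x: "x = t *\<^sub>R line_pt \<sigma>" "\<sigma> \<in> {s0..s1}"
        "x = t' *\<^sub>R line_pt \<sigma>'" "\<sigma>' \<in> {s1..s2}"
      unfolding sector_region_def by blast
    have "t = t'" using arg_cong[OF trans[OF x(1)[symmetric] x(3)], of "hdot c"] by simp
    moreover have "t * \<sigma> = t' * \<sigma>'" using arg_cong[OF trans[OF x(1)[symmetric] x(3)], of "cross k0"] by simp
    ultimately have "t = 0 \<or> \<sigma> = s1" using x(2,4) by auto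
    then show "x \<in> span {line_pt s1}" using x(1) by (auto intro: span_mul span_base span_zero)
  qed
  moreover have "negligible (span {line_pt s1})"
    by (rule negligible_lowdim) simp
  ultimately have "measure lebesgue (sector_region s0 s1 \<inter> sector_region s1 s2) = 0"
    using negligible_subset negligible_imp_measure0 by blast
  moreover have "sector_region s0 s1 \<union> sector_region s1 s2 = sector_region s0 s2"
    using assms(3,4) unfolding sector_region_def by fastforce
  ultimately show ?thesis
    using measure_Un3[of "sector_region s0 s1" lebesgue "sector_region s1 s2"]
      sector_region_lmeasurable interval_subset_params[OF assms(1) s1] interval_subset_params[OF s1 assms(2)]
    by (simp add: sector_area_def)
qed

lemma angle_diff:
  assumes "s0 \<in> params" "s1 \<in> params" "s0 \<le> s1"
  shows "angle s1 - angle s0 = 2 * sector_area s0 s1"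
proof -
  consider "0 \<le> s0" | "s0 < 0" "0 \<le> s1" | "s1 < 0" by linarith
  then show ?thesis
  proof cases
    case 1
    then show ?thesis using sector_area_add[OF zero_in_params assms(2) 1 assms(3)] assms(3)
      by (simp add: angle_def)
  next
    case 2
    then show ?thesis using sector_area_add[OF assms(1,2), of 0] by (simp add: angle_def)
  next
    case 3
    then show ?thesis using sector_area_add[OF assms(1) zero_in_params assms(3)] assms(3)
      by (simp add: angle_def)
  qed
qed

lemma angle_diff_ge:
  assumes "s0 \<in> params" "s1 \<in> params" "s0 \<le> s1"
  shows "s1 - s0 \<le> angle s1 - angle s0"
proof -
  have "1\<^sup>2 * (s1 - s0) / 2 \<le> sector_area s0 s1"
    using interval_subset_params[OF assms(1,2)] radius_ge_one
    by (intro sector_area_lower[OF _ assms(3)]) auto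
  then show ?thesis using angle_diff[OF assms] by simp
qed

lemma angle_strict_mono: "s0 \<in> params \<Longrightarrow> s1 \<in> params \<Longrightarrow> s0 < s1 \<Longrightarrow> angle s0 < angle s1"
  using angle_diff_ge[of s0 s1] by simp

lemma inj_on_angle: "inj_on angle params"
  by (rule inj_onI) (metis angle_strict_mono linorder_neqE_linordered_idom order_less_irrefl)

lemma angle_has_derivative:
  assumes s: "s \<in> params"
  shows "(angle has_real_derivative (radius s)\<^sup>2) (at s)"
proof -
  obtain e where "e > 0" and e: "ball s e \<subseteq> params" using open_params s open_contains_ball by blast
  show ?thesis
  proof (rule has_real_derivative_from_increment_bounds[OF \<open>e > 0\<close>])
    show "isCont (\<lambda>\<sigma>. (radius \<sigma>)\<^sup>2) s"
      using continuous_on_radius open_params s by (simp add: continuous_on_eq_continuous_at)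
  next
    fix a b m M
    assume ab: "s - e < a" "a < b" "b < s + e"
      and bounds: "\<And>\<sigma>. \<sigma> \<in> {a..b} \<Longrightarrow> m \<le> (radius \<sigma>)\<^sup>2 \<and> (radius \<sigma>)\<^sup>2 \<le> M"
    have sub: "{a..b} \<subseteq> params" using ab e by (auto simp: dist_real_def subset_iff)
    then have ab_params: "a \<in> params" "b \<in> params" using ab(2) by auto
    have "(radius a)\<^sup>2 \<le> M" using bounds[of a] ab(2) by simp
    then have "0 \<le> M" by (meson order_trans zero_le_power2)
    have r_lo: "sqrt (max m 0) \<le> radius \<sigma>" and r_hi: "radius \<sigma> \<le> sqrt M" if "\<sigma> \<in> {a..b}" for \<sigma>
      using bounds[OF that] radius_pos[of \<sigma>] sub that
      by (auto intro!: real_le_rsqrt real_le_lsqrt simp: max_def)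
    have "(sqrt (max m 0))\<^sup>2 * (b - a) / 2 \<le> sector_area a b"
      using sector_area_lower[OF sub _ _ r_lo] ab(2) by simp
    then have lo: "max m 0 * (b - a) \<le> 2 * sector_area a b" by simp
    have "sector_area a b \<le> (sqrt M)\<^sup>2 * (b - a) / 2"
      using sector_area_upper[OF sub _ r_hi] ab(2) by simp
    then have hi: "2 * sector_area a b \<le> M * (b - a)" using \<open>0 \<le> M\<close> by simp
    have "m * (b - a) \<le> max m 0 * (b - a)" using ab(2) by (intro mult_right_mono) auto
    then show "m * (b - a) \<le> angle b - angle a \<and> angle b - angle a \<le> M * (b - a)"
      using lo hi angle_diff[OF ab_params less_imp_le[OF ab(2)]] by linarith
  qed
qed

definition angles :: "real set" where
  "angles = angle ` params"

definition param :: "real \<Rightarrow> real" where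
  "param \<theta> = inv_into params angle \<theta>"

lemma param_angle [simp]: "s \<in> params \<Longrightarrow> param (angle s) = s"
  unfolding param_def by (rule inv_into_f_f[OF inj_on_angle])

lemma param_in_params: "\<theta> \<in> angles \<Longrightarrow> param \<theta> \<in> params"
  unfolding param_def angles_def by (rule inv_into_into)

lemma angle_param [simp]: "\<theta> \<in> angles \<Longrightarrow> angle (param \<theta>) = \<theta>"
  unfolding param_def angles_def by (rule f_inv_into_f)

lemma param_mono: "\<theta>1 \<in> angles \<Longrightarrow> \<theta>2 \<in> angles \<Longrightarrow> \<theta>1 \<le> \<theta>2 \<Longrightarrow> param \<theta>1 \<le> param \<theta>2"
  by (metis angle_param angle_strict_mono not_le param_in_params)

lemma lipschitz_param: "1-lipschitz_on angles param"
proof (rule lipschitz_onI)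
  have *: "dist (param a) (param b) \<le> dist a b" if "a \<in> angles" "b \<in> angles" "a \<le> b" for a b
    using angle_diff_ge[OF param_in_params param_in_params param_mono] that
    by (simp add: dist_real_def param_mono)
  then show "dist (param a) (param b) \<le> 1 * dist a b" if "a \<in> angles" "b \<in> angles" for a b
    using that *[of a b] *[of b a] by (metis dist_commute mult_1 nle_le)
qed simp

lemma continuous_on_angle: "continuous_on params angle"
proof (intro continuous_at_imp_continuous_on ballI)
  fix s assume "s \<in> params"
  then show "isCont angle s" by (rule DERIV_isCont[OF angle_has_derivative])
qed

lemma open_angles: "open angles"
  unfolding angles_def
  by (rule invariance_of_domain[OF continuous_on_angle open_params inj_on_angle])

lemma param_has_derivative:
  assumes \<theta>: "\<theta> \<in> angles"
  shows "(param has_real_derivative (cogauge (param \<theta>))\<^sup>2) (at \<theta>)"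
proof -
  obtain e where "e > 0" and e: "ball \<theta> e \<subseteq> angles" using open_angles \<theta> open_contains_ball by blast
  have "isCont param \<theta>"
    using lipschitz_on_continuous_on[OF lipschitz_param] open_angles \<theta>
    by (simp add: continuous_on_eq_continuous_at)
  moreover have "angle (param y) = y" if "\<theta> - e < y" "y < \<theta> + e" for y
    using that e by (auto simp: dist_real_def subset_iff)
  ultimately have "(param has_real_derivative inverse ((radius (param \<theta>))\<^sup>2)) (at \<theta>)"
    using \<open>e > 0\<close> radius_pos[OF param_in_params[OF \<theta>]]
    by (intro DERIV_inverse_function[where f=angle and g=param and x=\<theta> and a="\<theta> - e" and b="\<theta> + e",
          OF angle_has_derivative[OF param_in_params[OF \<theta>]]]) simp_all
  then show ?thesis by (simp add: cogauge_def power_inverse)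
qed

lemma bpoint_in_sector_iff:
  assumes s: "s \<in> params" and \<sigma>: "\<sigma> \<in> params"
  shows "bpoint \<sigma> \<in> sector k0 (bpoint s) \<longleftrightarrow> min 0 s \<le> \<sigma> \<and> \<sigma> \<le> max 0 s"
proof
  assume "bpoint \<sigma> \<in> sector k0 (bpoint s)"
  then obtain a b where ab: "bpoint \<sigma> = a *\<^sub>R k0 + b *\<^sub>R bpoint s" "0 \<le> a" "0 \<le> b"
    unfolding sector_def by blast
  have r: "radius \<sigma> = a + b * radius s"
    using arg_cong[OF ab(1), of "hdot c"] base_pairing by simp
  have c: "radius \<sigma> * \<sigma> = b * (radius s * s)"
    using arg_cong[OF ab(1), of "cross k0"] by simp
  define l where "l = b * radius s / radius \<sigma>"
  have "\<sigma> = l * s" "0 \<le> l" "l \<le> 1"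
    using c r ab(2,3) radius_pos[OF s] radius_pos[OF \<sigma>] by (auto simp: l_def field_simps)
  then show "min 0 s \<le> \<sigma> \<and> \<sigma> \<le> max 0 s"
    by (cases "0 \<le> s") (auto simp: mult_le_0_iff mult_left_le_one_le
        intro: mult_left_le_one_le[of "-s" l, simplified])
next
  assume b: "min 0 s \<le> \<sigma> \<and> \<sigma> \<le> max 0 s"
  define l where "l = (if s = 0 then 0 else \<sigma> / s)"
  have l: "0 \<le> l" "l \<le> 1" "\<sigma> = l * s"
    using b by (auto simp: l_def field_simps divide_le_eq_1 zero_le_divide_iff split: if_splits)
  have "bpoint \<sigma> = (radius \<sigma> * (1 - l)) *\<^sub>R k0 + (radius \<sigma> * l / radius s) *\<^sub>R bpoint s"
    using radius_pos[OF s] l(3) by (simp add: bpoint_def line_pt_def algebra_simps)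
  moreover have "0 \<le> radius \<sigma> * (1 - l)" "0 \<le> radius \<sigma> * l / radius s"
    using radius_pos[OF s] radius_pos[OF \<sigma>] l by auto
  ultimately show "bpoint \<sigma> \<in> sector k0 (bpoint s)" unfolding sector_def by blast
qed

lemma arc_region_eq_sector_region:
  assumes s: "s \<in> params"
  shows "arc_region K k0 (bpoint s) = sector_region (min 0 s) (max 0 s)"
proof (intro equalityI subsetI)
  fix x assume "x \<in> arc_region K k0 (bpoint s)"
  then obtain t w where x: "x = t *\<^sub>R w" "0 \<le> t" "t \<le> 1" "w \<in> frontier K" "w \<in> sector k0 (bpoint s)"
    unfolding arc_region_def by blast
  obtain \<sigma> where \<sigma>: "\<sigma> \<in> params" "w = bpoint \<sigma>" using obtain_bpoint_of_frontier[OF x(4)] by blast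
  have "\<sigma> \<in> {min 0 s .. max 0 s}" using bpoint_in_sector_iff[OF s \<sigma>(1)] x(5) \<sigma>(2) by simp
  moreover have "x = (t * radius \<sigma>) *\<^sub>R line_pt \<sigma>" "0 \<le> t * radius \<sigma>" "t * radius \<sigma> \<le> radius \<sigma>"
    using x \<sigma> radius_pos[OF \<sigma>(1)] by (simp_all add: bpoint_def mult_left_le_one_le)
  ultimately show "x \<in> sector_region (min 0 s) (max 0 s)" unfolding sector_region_def by blast
next
  fix x assume "x \<in> sector_region (min 0 s) (max 0 s)"
  then obtain t \<sigma> where x: "x = t *\<^sub>R line_pt \<sigma>" "\<sigma> \<in> {min 0 s .. max 0 s}" "0 \<le> t" "t \<le> radius \<sigma>"
    unfolding sector_region_def by blast
  have \<sigma>: "\<sigma> \<in> params"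
    using x(2) interval_subset_params[OF zero_in_params s] interval_subset_params[OF s zero_in_params]
    by (cases "0 \<le> s") auto
  have "x = (t / radius \<sigma>) *\<^sub>R bpoint \<sigma>" "0 \<le> t / radius \<sigma>" "t / radius \<sigma> \<le> 1"
    using x radius_pos[OF \<sigma>] by (simp_all add: bpoint_def)
  moreover have "bpoint \<sigma> \<in> frontier K" by (rule bpoint_frontier[OF \<sigma>])
  moreover have "bpoint \<sigma> \<in> sector k0 (bpoint s)" using bpoint_in_sector_iff[OF s \<sigma>] x(2) by simp
  ultimately show "x \<in> arc_region K k0 (bpoint s)" unfolding arc_region_def by blast
qed

lemma conv_angle_bpoint:
  assumes s: "s \<in> params"
  shows "conv_angle K k0 (bpoint s) = angle s"
proof -
  have "0 \<le> cross k0 (bpoint s) \<longleftrightarrow> 0 \<le> s" using radius_pos[OF s] by (simp add: zero_le_mult_iff)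
  then show ?thesis
    unfolding conv_angle_def arc_region_eq_sector_region[OF s] angle_def sector_area_def
    by (cases "0 \<le> s") auto
qed

lemma conv_domain_eq: "conv_domain K k0 = angles"
  unfolding conv_domain_def angles_def frontier_K_eq image_image using conv_angle_bpoint by simp

lemma conv_point_angle:
  assumes s: "s \<in> params"
  shows "conv_point K k0 (angle s) = bpoint s"
  unfolding conv_point_def
proof (rule the_equality)
  show "bpoint s \<in> frontier K \<and> conv_angle K k0 (bpoint s) = angle s"
    using bpoint_frontier[OF s] conv_angle_bpoint[OF s] by simp
next
  fix w assume w: "w \<in> frontier K \<and> conv_angle K k0 w = angle s"
  then obtain \<sigma> where \<sigma>: "\<sigma> \<in> params" "w = bpoint \<sigma>" using obtain_bpoint_of_frontier by blast
  then have "angle \<sigma> = angle s" using w conv_angle_bpoint by simp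
  then show "w = bpoint s" using inj_on_angle \<sigma> s by (auto dest: inj_onD)
qed

lemma conv_point_eq: "\<theta> \<in> angles \<Longrightarrow> conv_point K k0 \<theta> = bpoint (param \<theta>)"
  using conv_point_angle[OF param_in_params] by simp

lemma conv_point_image: "conv_point K k0 ` angles = frontier K"
  unfolding frontier_K_eq angles_def image_image using conv_point_angle by simp

(* The point of the dual plane whose pairing with line_pt sigma is the affine function
   cogauge s + (sigma - s) * beta. *)
definition dual_pt :: "real \<Rightarrow> real \<Rightarrow> real \<times> real" where
  "dual_pt s \<beta> = prod.swap (cogauge s *\<^sub>R line_dir - \<beta> *\<^sub>R line_pt s)"

lemma bpoint_has_vector_derivative:
  assumes s: "s \<in> params" and D: "(cogauge has_real_derivative D) (at s within U)"
  shows "(bpoint has_vector_derivative (inverse (cogauge s))\<^sup>2 *\<^sub>R prod.swap (dual_pt s D)) (at s within U)"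
proof -
  let ?h = "cogauge s"
  have "?h \<noteq> 0" using cogauge_pos[OF s] by simp
  have "(line_pt has_vector_derivative line_dir) (at s within U)"
    unfolding line_pt_def by (auto intro!: derivative_eq_intros)
  then have "((\<lambda>s. inverse (cogauge s) *\<^sub>R line_pt s) has_vector_derivative
      inverse ?h *\<^sub>R line_dir + (- (inverse ?h * D * inverse ?h)) *\<^sub>R line_pt s) (at s within U)"
    using \<open>?h \<noteq> 0\<close> by (intro has_vector_derivative_scaleR DERIV_inverse'[OF D])
  moreover have "(\<lambda>s. inverse (cogauge s) *\<^sub>R line_pt s) = bpoint"
    by (simp add: fun_eq_iff bpoint_eq_inverse_cogauge)
  moreover have "(inverse ?h)\<^sup>2 *\<^sub>R prod.swap (dual_pt s D)
      = (inverse ?h * inverse ?h * ?h) *\<^sub>R line_dir - (inverse ?h * D * inverse ?h) *\<^sub>R line_pt s"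
    by (simp add: dual_pt_def power2_eq_square scaleR_diff_right mult_ac)
  moreover have "inverse ?h * inverse ?h * ?h = inverse ?h" using \<open>?h \<noteq> 0\<close> by simp
  ultimately show ?thesis by simp
qed

lemma conv_point_has_vector_derivative:
  assumes \<theta>: "\<theta> \<in> angles" "\<theta> \<in> T" and U: "param ` (T \<inter> angles) \<subseteq> U"
    and D: "(cogauge has_real_derivative D) (at (param \<theta>) within U)"
  shows "(conv_point K k0 has_vector_derivative prod.swap (dual_pt (param \<theta>) D)) (at \<theta> within T)"
proof -
  let ?s = "param \<theta>"
  have s: "?s \<in> params" by (rule param_in_params[OF \<theta>(1)])
  have "(param has_vector_derivative (cogauge ?s)\<^sup>2) (at \<theta> within T \<inter> angles)"
    using param_has_derivative[OF \<theta>(1)] unfolding has_real_derivative_iff_has_vector_derivative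
    by (rule has_vector_derivative_at_within)
  moreover have "(bpoint has_vector_derivative (inverse (cogauge ?s))\<^sup>2 *\<^sub>R prod.swap (dual_pt ?s D))
      (at ?s within param ` (T \<inter> angles))"
    using bpoint_has_vector_derivative[OF s D] U by (rule has_vector_derivative_within_subset)
  ultimately have "((bpoint \<circ> param) has_vector_derivative
      (cogauge ?s)\<^sup>2 *\<^sub>R (inverse (cogauge ?s))\<^sup>2 *\<^sub>R prod.swap (dual_pt ?s D)) (at \<theta> within T \<inter> angles)"
    by (rule vector_diff_chain_within)
  moreover have "(cogauge ?s)\<^sup>2 *\<^sub>R (inverse (cogauge ?s))\<^sup>2 *\<^sub>R v = v" for v :: "real \<times> real"
    using cogauge_pos[OF s] by (simp add: power_inverse)
  moreover have "at \<theta> within T \<inter> angles = at \<theta> within T"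
    by (rule at_within_nhd[OF \<theta>(1) open_angles]) auto
  ultimately have deriv: "((bpoint \<circ> param) has_vector_derivative prod.swap (dual_pt ?s D)) (at \<theta> within T)"
    by simp
  obtain e where "e > 0" "ball \<theta> e \<subseteq> angles" using open_angles \<theta>(1) open_contains_ball by blast
  then have "(bpoint \<circ> param) x = conv_point K k0 x" if "dist x \<theta> < e" for x
    using that by (simp add: conv_point_eq dist_commute subset_iff)
  then show ?thesis
    using has_vector_derivative_transform_within[OF deriv \<open>e > 0\<close> \<theta>(2)] by blast
qed

lemma conv_point_right_derivative:
  assumes "\<theta> \<in> angles"
  shows "(conv_point K k0 has_vector_derivative prod.swap (dual_pt (param \<theta>) (cg.right_deriv (param \<theta>))))
    (at \<theta> within {\<theta>..})"
  using assms param_mono[OF assms]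
  by (intro conv_point_has_vector_derivative[OF _ _ _ cg.has_right_derivative[OF param_in_params]]) auto

lemma conv_point_left_derivative:
  assumes "\<theta> \<in> angles"
  shows "(conv_point K k0 has_vector_derivative prod.swap (dual_pt (param \<theta>) (cg.left_deriv (param \<theta>))))
    (at \<theta> within {..\<theta>})"
  using assms param_mono[OF _ assms]
  by (intro conv_point_has_vector_derivative[OF _ _ _ cg.has_left_derivative[OF param_in_params]]) auto

lemma conv_point_derivative:
  assumes "\<theta> \<in> angles" "cg.right_deriv (param \<theta>) = cg.left_deriv (param \<theta>)"
  shows "(conv_point K k0 has_vector_derivative prod.swap (dual_pt (param \<theta>) (cg.right_deriv (param \<theta>)))) (at \<theta>)"
  using conv_point_has_vector_derivative[OF assms(1) _ _
      cg.has_derivative_if_one_sided_eq[OF param_in_params[OF assms(1)] assms(2)], of UNIV]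
  by simp

definition kinks :: "real set" where
  "kinks = angle ` {s \<in> params. cg.right_deriv s \<noteq> cg.left_deriv s}"

lemma countable_kinks: "countable kinks"
  unfolding kinks_def by (rule countable_image[OF cg.countable_kinks])

lemma one_sided_derivs_eq_if_not_kink:
  assumes "\<theta> \<in> angles" "\<theta> \<notin> kinks"
  shows "cg.right_deriv (param \<theta>) = cg.left_deriv (param \<theta>)"
  using assms param_in_params[OF assms(1)] angle_param[OF assms(1)] unfolding kinks_def by force

lemma lipschitz_on_line_pt: "(norm line_dir)-lipschitz_on S line_pt"
proof (rule lipschitz_onI)
  fix a b
  have "line_pt a - line_pt b = (a - b) *\<^sub>R line_dir" by (simp add: line_pt_def algebra_simps)
  then show "dist (line_pt a) (line_pt b) \<le> norm line_dir * dist a b"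
    by (simp add: dist_norm dist_real_def)
qed simp

lemma bpoint_locally_lipschitz:
  assumes s: "s \<in> params"
  obtains e L where "e > 0" "L-lipschitz_on (cball s e) bpoint"
proof -
  obtain e L where "e > 0" and sub: "cball s e \<subseteq> params" and L: "L-lipschitz_on (cball s e) cogauge"
    by (rule cg.locally_lipschitz[OF s])
  have ne: "cball s e \<noteq> {}" using \<open>e > 0\<close> by simp
  have "continuous_on (cball s e) cogauge" using cg.continuous_on sub by (rule continuous_on_subset)
  then obtain x0 where x0: "x0 \<in> cball s e" "\<And>y. y \<in> cball s e \<Longrightarrow> cogauge x0 \<le> cogauge y"
    using continuous_attains_inf[OF compact_cball ne] by blast
  define m where "m = cogauge x0"
  have "0 < m" using cogauge_pos x0(1) sub by (auto simp: m_def)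
  have m: "m \<le> cogauge y" if "y \<in> cball s e" for y using x0(2)[OF that] by (simp add: m_def)
  have "compact (line_pt ` cball s e)"
    unfolding line_pt_def by (intro compact_continuous_image continuous_intros compact_cball)
  then have "bounded (line_pt ` cball s e)" by (rule compact_imp_bounded)
  then obtain N where N: "\<forall>x\<in>line_pt ` cball s e. norm x \<le> N"
    unfolding bounded_iff by blast
  have "(L / m\<^sup>2 * N + 1 / m * norm line_dir)-lipschitz_on (cball s e) (\<lambda>y. inverse (cogauge y) *\<^sub>R line_pt y)"
  proof (rule lipschitz_on_scaleR[OF lipschitz_on_inverse[OF L \<open>0 < m\<close> m] lipschitz_on_line_pt \<open>cball s e \<noteq> {}\<close>])
    show "\<bar>inverse (cogauge y)\<bar> \<le> 1 / m" if "y \<in> cball s e" for y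
      using m[OF that] \<open>0 < m\<close> by (simp add: inverse_eq_divide frac_le)
    show "norm (line_pt y) \<le> N" if "y \<in> cball s e" for y
      using N that by blast
  qed
  moreover have "(\<lambda>y. inverse (cogauge y) *\<^sub>R line_pt y) = bpoint"
    by (simp add: fun_eq_iff bpoint_eq_inverse_cogauge)
  ultimately have "(L / m\<^sup>2 * N + 1 / m * norm line_dir)-lipschitz_on (cball s e) bpoint"
    by (simp only:)
  then show ?thesis by (rule that[OF \<open>e > 0\<close>])
qed

lemma conv_point_locally_lipschitz:
  assumes \<theta>: "\<theta> \<in> angles"
  obtains e L where "e > 0" "L-lipschitz_on (angles \<inter> ball \<theta> e) (conv_point K k0)"
proof -
  obtain e L where "e > 0" and L: "L-lipschitz_on (cball (param \<theta>) e) bpoint"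
    by (rule bpoint_locally_lipschitz[OF param_in_params[OF \<theta>]])
  have P: "1-lipschitz_on (angles \<inter> ball \<theta> e) param"
    by (rule lipschitz_on_subset[OF lipschitz_param]) simp
  have "param ` (angles \<inter> ball \<theta> e) \<subseteq> cball (param \<theta>) e"
  proof (clarify)
    fix x assume "x \<in> angles" "x \<in> ball \<theta> e"
    then have "dist (param \<theta>) (param x) \<le> 1 * dist \<theta> x"
      using lipschitz_onD[OF lipschitz_param \<theta>] by blast
    then show "param x \<in> cball (param \<theta>) e" using \<open>x \<in> ball \<theta> e\<close> by simp
  qed
  then have "(L * 1)-lipschitz_on (angles \<inter> ball \<theta> e) (bpoint \<circ> param)"
    using L by (intro lipschitz_on_compose[OF P]) (rule lipschitz_on_subset)
  then have "L-lipschitz_on (angles \<inter> ball \<theta> e) (bpoint \<circ> param)" by simp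
  then have "L-lipschitz_on (angles \<inter> ball \<theta> e) (conv_point K k0)"
    by (rule lipschitz_on_transform) (simp add: conv_point_eq)
  then show ?thesis by (rule that[OF \<open>e > 0\<close>])
qed

lemma cross_line_pt_line_dir [simp]: "cross (line_pt \<sigma>) line_dir = 1"
  using base_pairing_coords by (simp add: line_pt_def cross_def line_dir_def algebra_simps)

lemma hdot_dual_pt_line_pt: "hdot (dual_pt s \<beta>) (line_pt \<sigma>) = cogauge s + (\<sigma> - s) * \<beta>"
  by (simp add: dual_pt_def hdot_swap cross_line_pt_line_pt algebra_simps)

lemma hdot_dual_pt_bpoint: "s \<in> params \<Longrightarrow> hdot (dual_pt s \<beta>) (bpoint s) = 1"
  using radius_pos[of s] by (simp add: bpoint_def hdot_dual_pt_line_pt cogauge_def)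

lemma dual_pt_inj: "dual_pt s \<beta>1 = dual_pt s \<beta>2 \<Longrightarrow> \<beta>1 = \<beta>2"
  using line_pt_nonzero[of s] by (auto simp: dual_pt_def prod_eq_iff algebra_simps)

lemma dual_pt_in_antipolar:
  assumes s: "s \<in> params" and \<beta>: "cg.right_deriv s \<le> \<beta>" "\<beta> \<le> cg.left_deriv s"
  shows "dual_pt s \<beta> \<in> antipolar K"
  unfolding antipolar_iff
proof
  fix w assume w: "w \<in> K"
  define t \<sigma> where "t = hdot c w" and "\<sigma> = cross k0 w / hdot c w"
  have "1 \<le> t" using hdot_dual_base_ge[OF w] by (simp add: t_def)
  have w_eq: "w = t *\<^sub>R line_pt \<sigma>" unfolding \<sigma>_def t_def using \<open>1 \<le> t\<close> t_def by (intro eq_scaleR_line_pt) simp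
  then have \<sigma>: "\<sigma> \<in> params" "radius \<sigma> \<le> t" using scaleR_line_pt_in_K_iff[of t \<sigma>] \<open>1 \<le> t\<close> w by auto
  have "cogauge \<sigma> \<le> cogauge s + \<beta> * (\<sigma> - s)" using cg.supergradient_iff[OF s] \<beta> \<sigma>(1) by blast
  then have "t * cogauge \<sigma> \<le> t * (cogauge s + \<beta> * (\<sigma> - s))"
    using \<open>1 \<le> t\<close> by (intro mult_left_mono) simp_all
  also have "\<dots> = hdot (dual_pt s \<beta>) w"
    by (simp add: w_eq hdot_dual_pt_line_pt algebra_simps)
  finally have "t * cogauge \<sigma> \<le> hdot (dual_pt s \<beta>) w" .
  moreover have "1 \<le> t * cogauge \<sigma>"
    using \<sigma> radius_pos[OF \<sigma>(1)] by (simp add: cogauge_def le_divide_eq field_simps)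
  ultimately show "1 \<le> hdot (dual_pt s \<beta>) w" by linarith
qed

lemma eq_dual_pt_if_supporting:
  assumes s: "s \<in> params" and \<pi>: "\<pi> \<in> antipolar K" and one: "hdot \<pi> (bpoint s) = 1"
  obtains \<beta> where "cg.right_deriv s \<le> \<beta>" "\<beta> \<le> cg.left_deriv s" "\<pi> = dual_pt s \<beta>"
proof -
  define \<alpha> \<beta> where "\<alpha> = hdot \<pi> k0" and "\<beta> = hdot \<pi> line_dir"
  have line: "hdot \<pi> (line_pt \<sigma>) = \<alpha> + \<sigma> * \<beta>" for \<sigma> by (simp add: line_pt_def \<alpha>_def \<beta>_def)
  have ge: "cogauge \<sigma> \<le> \<alpha> + \<sigma> * \<beta>" if "\<sigma> \<in> params" for \<sigma>
  proof -
    have "1 \<le> hdot \<pi> (bpoint \<sigma>)" using \<pi> bpoint_in_K[OF that] by (simp add: antipolar_iff)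
    then have "1 \<le> radius \<sigma> * (\<alpha> + \<sigma> * \<beta>)" by (simp add: bpoint_def line)
    then show ?thesis using radius_pos[OF that] by (simp add: cogauge_def inverse_eq_divide divide_le_eq mult.commute)
  qed
  have eq: "\<alpha> + s * \<beta> = cogauge s"
    using one radius_pos[OF s] by (simp add: bpoint_def line cogauge_def field_simps)
  have "\<forall>t\<in>params. cogauge t \<le> cogauge s + \<beta> * (t - s)"
  proof
    fix t assume "t \<in> params"
    then have "cogauge t \<le> \<alpha> + t * \<beta>" by (rule ge)
    then show "cogauge t \<le> cogauge s + \<beta> * (t - s)" using eq by (simp add: algebra_simps)
  qed
  then have "cg.right_deriv s \<le> \<beta>" "\<beta> \<le> cg.left_deriv s" using cg.supergradient_iff[OF s] by auto
  moreover have "\<pi> = dual_pt s \<beta>"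
  proof -
    have "\<pi> = prod.swap (\<alpha> *\<^sub>R line_dir - \<beta> *\<^sub>R k0)"
      using swap_hdot_decomposition[of \<pi> k0 c] base_pairing
      unfolding \<alpha>_def \<beta>_def line_dir_def by simp
    also have "\<dots> = dual_pt s \<beta>"
      using eq[symmetric] by (simp add: dual_pt_def line_pt_def algebra_simps)
    finally show ?thesis .
  qed
  ultimately show ?thesis by (rule that)
qed

lemma supporting_functionals_eq:
  assumes s: "s \<in> params"
  shows "{\<pi> \<in> frontier (antipolar K). hdot \<pi> (bpoint s) = 1}
    = dual_pt s ` {cg.right_deriv s .. cg.left_deriv s}"
proof (intro equalityI subsetI)
  fix \<pi> assume "\<pi> \<in> {\<pi> \<in> frontier (antipolar K). hdot \<pi> (bpoint s) = 1}"
  moreover have "frontier (antipolar K) \<subseteq> antipolar K"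
    by (simp add: closed_antipolar frontier_subset_closed)
  ultimately obtain \<beta> where "cg.right_deriv s \<le> \<beta>" "\<beta> \<le> cg.left_deriv s" "\<pi> = dual_pt s \<beta>"
    using eq_dual_pt_if_supporting[OF s] by blast
  then show "\<pi> \<in> dual_pt s ` {cg.right_deriv s .. cg.left_deriv s}" by simp
next
  fix \<pi> assume "\<pi> \<in> dual_pt s ` {cg.right_deriv s .. cg.left_deriv s}"
  then obtain \<beta> where \<beta>: "cg.right_deriv s \<le> \<beta>" "\<beta> \<le> cg.left_deriv s" "\<pi> = dual_pt s \<beta>" by auto
  then have "\<pi> \<in> antipolar K" "hdot \<pi> (bpoint s) = 1"
    using dual_pt_in_antipolar[OF s] hdot_dual_pt_bpoint[OF s] by auto
  then show "\<pi> \<in> {\<pi> \<in> frontier (antipolar K). hdot \<pi> (bpoint s) = 1}"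
    using antipolar_frontier_if_touching bpoint_in_K[OF s] by blast
qed

lemma loc_lipschitz_on_conv_point:
  assumes "bounded_linear l"
  shows "loc_lipschitz_on (conv_domain K k0) (\<lambda>\<theta>. l (conv_point K k0 \<theta>))"
  unfolding conv_domain_eq
proof (rule loc_lipschitz_onI)
  fix \<theta> assume "\<theta> \<in> angles"
  then obtain e L where "e > 0" "L-lipschitz_on (angles \<inter> ball \<theta> e) (conv_point K k0)"
    by (rule conv_point_locally_lipschitz)
  moreover obtain B where "B-lipschitz_on (conv_point K k0 ` (angles \<inter> ball \<theta> e)) l"
    using bounded_linear.lipschitz_boundE[OF assms] by blast
  ultimately show "\<exists>e>0. \<exists>L. L-lipschitz_on (angles \<inter> ball \<theta> e) (\<lambda>\<theta>. l (conv_point K k0 \<theta>))"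
    using lipschitz_on_compose2 by blast
qed

lemma kinks_null: "kinks \<in> null_sets lebesgue"
  using null_sets_completionI[OF countable_imp_null_set_lborel[OF countable_kinks]] by simp

lemma differentiable_off_kinks:
  fixes l :: "real \<times> real \<Rightarrow> real"
  assumes "bounded_linear l" "\<theta> \<in> conv_domain K k0 - kinks"
  shows "(\<lambda>\<theta>. l (conv_point K k0 \<theta>)) differentiable (at \<theta>)"
proof -
  have "\<theta> \<in> angles" "\<theta> \<notin> kinks" using assms(2) by (auto simp: conv_domain_eq)
  from conv_point_derivative[OF this(1) one_sided_derivs_eq_if_not_kink[OF this]]
  show ?thesis
    using has_real_derivative_bounded_linear[OF assms(1)] real_differentiable_def by blast
qed

end

section \<open>Derivatives of the convex trigonometric functions\<close>

locale convex_trig_pair = convex_trig_domain K k0 c + dual: convex_trig_domain "antipolar K" c k0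
  for K k0 c
begin

lemma dual_angle_points:
  assumes "\<theta> \<in> angles"
  shows "conv_point (antipolar K) c ` dual_angles K k0 c \<theta>
    = dual_pt (param \<theta>) ` {cg.right_deriv (param \<theta>) .. cg.left_deriv (param \<theta>)}"
proof -
  have "conv_point (antipolar K) c ` dual_angles K k0 c \<theta>
      = {\<pi> \<in> conv_point (antipolar K) c ` dual.angles. hdot \<pi> (bpoint (param \<theta>)) = 1}"
    unfolding dual_angles_eq dual.conv_domain_eq conv_point_eq[OF assms] by blast
  then show ?thesis
    using supporting_functionals_eq[OF param_in_params[OF assms]] by (simp add: dual.conv_point_image)
qed

lemma has_derivative_if_unique_dual_angle:
  assumes "\<theta> \<in> conv_domain K k0" "dual_angles K k0 c \<theta> = {\<eta>}"
  shows "(conv_point K k0 has_vector_derivative prod.swap (conv_point (antipolar K) c \<eta>)) (at \<theta>)"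
proof -
  have \<theta>: "\<theta> \<in> angles" using assms(1) by (simp add: conv_domain_eq)
  let ?s = "param \<theta>"
  have le: "cg.right_deriv ?s \<le> cg.left_deriv ?s"
    by (rule cg.right_deriv_le_left_deriv[OF param_in_params[OF \<theta>]])
  have pts: "dual_pt ?s ` {cg.right_deriv ?s .. cg.left_deriv ?s} = {conv_point (antipolar K) c \<eta>}"
    using dual_angle_points[OF \<theta>] assms(2) by simp
  then have "dual_pt ?s (cg.right_deriv ?s) = dual_pt ?s (cg.left_deriv ?s)"
    "dual_pt ?s (cg.right_deriv ?s) = conv_point (antipolar K) c \<eta>"
    using le by (auto simp: image_subset_iff dest!: equalityD1)
  then show ?thesis
    using conv_point_derivative[OF \<theta> dual_pt_inj] by simp
qed

lemma one_sided_derivatives_bracket: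
  fixes l :: "real \<times> real \<Rightarrow> real"
  assumes l: "bounded_linear l"
  shows "\<exists>Lf Rf :: real \<Rightarrow> real.
    (\<forall>\<theta> \<in> conv_domain K k0.
      ((\<lambda>\<theta>. l (conv_point K k0 \<theta>)) has_real_derivative Lf \<theta>) (at \<theta> within {..\<theta>}) \<and>
      ((\<lambda>\<theta>. l (conv_point K k0 \<theta>)) has_real_derivative Rf \<theta>) (at \<theta> within {\<theta>..})) \<and>
    countable {\<theta> \<in> conv_domain K k0. Lf \<theta> \<noteq> Rf \<theta>} \<and>
    (\<forall>\<theta> \<in> conv_domain K k0. Lf \<theta> \<noteq> Rf \<theta> \<longrightarrow>
      (\<forall>\<eta> \<in> dual_angles K k0 c \<theta>.
        min (Lf \<theta>) (Rf \<theta>) \<le> l (prod.swap (conv_point (antipolar K) c \<eta>)) \<and>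
        l (prod.swap (conv_point (antipolar K) c \<eta>)) \<le> max (Lf \<theta>) (Rf \<theta>)))"
proof -
  define g where "g \<theta> \<beta> = l (prod.swap (dual_pt (param \<theta>) \<beta>))" for \<theta> \<beta>
  define Lf Rf where "Lf \<theta> = g \<theta> (cg.left_deriv (param \<theta>))"
    and "Rf \<theta> = g \<theta> (cg.right_deriv (param \<theta>))" for \<theta>
  have g: "g \<theta> \<beta> = cogauge (param \<theta>) * l line_dir - l (line_pt (param \<theta>)) * \<beta>" for \<theta> \<beta>
    using l by (simp add: g_def dual_pt_def linear_simps)
  have derivs: "((\<lambda>\<theta>. l (conv_point K k0 \<theta>)) has_real_derivative Lf \<theta>) (at \<theta> within {..\<theta>}) \<and>
      ((\<lambda>\<theta>. l (conv_point K k0 \<theta>)) has_real_derivative Rf \<theta>) (at \<theta> within {\<theta>..})"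
    if "\<theta> \<in> conv_domain K k0" for \<theta>
    using that unfolding Lf_def Rf_def g_def conv_domain_eq
    by (intro conjI has_real_derivative_bounded_linear[OF l]
        conv_point_left_derivative conv_point_right_derivative)
  have "{\<theta> \<in> conv_domain K k0. Lf \<theta> \<noteq> Rf \<theta>} \<subseteq> kinks"
    using one_sided_derivs_eq_if_not_kink by (auto simp: conv_domain_eq Lf_def Rf_def) metis
  then have countable: "countable {\<theta> \<in> conv_domain K k0. Lf \<theta> \<noteq> Rf \<theta>}"
    using countable_kinks countable_subset by blast
  have bracket: "min (Lf \<theta>) (Rf \<theta>) \<le> l (prod.swap (conv_point (antipolar K) c \<eta>)) \<and>
      l (prod.swap (conv_point (antipolar K) c \<eta>)) \<le> max (Lf \<theta>) (Rf \<theta>)"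
    if "\<theta> \<in> conv_domain K k0" and \<eta>: "\<eta> \<in> dual_angles K k0 c \<theta>" for \<theta> \<eta>
  proof -
    have \<theta>: "\<theta> \<in> angles" using that(1) by (simp add: conv_domain_eq)
    have "conv_point (antipolar K) c \<eta> \<in> dual_pt (param \<theta>) ` {cg.right_deriv (param \<theta>) .. cg.left_deriv (param \<theta>)}"
      using dual_angle_points[OF \<theta>] \<eta> by blast
    then obtain \<beta> where \<beta>: "cg.right_deriv (param \<theta>) \<le> \<beta>" "\<beta> \<le> cg.left_deriv (param \<theta>)"
      "conv_point (antipolar K) c \<eta> = dual_pt (param \<theta>) \<beta>"
      by auto
    then show ?thesis
      using affine_value_between[OF \<beta>(1,2), of "cogauge (param \<theta>) * l line_dir" "l (line_pt (param \<theta>))"]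
      by (simp add: Lf_def Rf_def g flip: g_def min.commute max.commute)
  qed
  show ?thesis
    using derivs countable bracket by (intro exI[of _ Lf] exI[of _ Rf]) blast
qed

end

lemma convex_trig_domain_of_props:
  assumes "prop_i \<Omega>" "prop_star \<Omega>" "\<omega>0 \<in> frontier \<Omega>" "\<omega>0' \<in> frontier (antipolar \<Omega>)"
    and "hdot \<omega>0' \<omega>0 = 1"
  shows "convex_trig_domain \<Omega> \<omega>0 \<omega>0'"
proof
  show "convex \<Omega>" "closed \<Omega>" using assms(1) by (simp_all add: prop_i_def)
  show "a *\<^sub>R w \<in> \<Omega>" if "w \<in> \<Omega>" "1 < a" for w a
    using assms(1) that by (auto simp: prop_i_def)
  show "a *\<^sub>R w \<notin> frontier \<Omega>" if "w \<in> \<Omega>" "1 < a" for w a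
    using assms(2) that unfolding prop_star_def by blast
  show "\<omega>0' \<in> antipolar \<Omega>"
    using assms(4) closed_antipolar frontier_subset_closed by blast
qed (use assms in simp_all)

lemma convex_trig_domain_antipolar:
  assumes "prop_i \<Omega>" "prop_2star \<Omega>" "\<omega>0 \<in> frontier \<Omega>" "\<omega>0' \<in> frontier (antipolar \<Omega>)"
    and "hdot \<omega>0' \<omega>0 = 1"
  shows "convex_trig_domain (antipolar \<Omega>) \<omega>0' \<omega>0"
proof
  show "convex (antipolar \<Omega>)" "closed (antipolar \<Omega>)" by (simp_all add: convex_antipolar closed_antipolar)
  show "a *\<^sub>R \<pi> \<in> antipolar \<Omega>" if "\<pi> \<in> antipolar \<Omega>" "1 < a" for \<pi> a
    using that by (simp add: antipolar_scaleR)
  show "a *\<^sub>R \<pi> \<notin> frontier (antipolar \<Omega>)" if "\<pi> \<in> antipolar \<Omega>" "1 < a" for \<pi> a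
    using scaleR_antipolar_in_interior[OF assms(2) that] by (simp add: frontier_def)
  have "closed \<Omega>" using assms(1) by (simp add: prop_i_def)
  then show "\<omega>0 \<in> antipolar (antipolar \<Omega>)"
    using assms(3) frontier_subset_closed mem_antipolar_antipolar by blast
  show "hdot \<omega>0 \<omega>0' = 1" using assms(5) by (simp add: hdot_commute)
qed (rule assms(4))

theorem theorem5:
  fixes \<Omega> :: "(real \<times> real) set" and \<omega>0 \<omega>0' :: "real \<times> real"
  assumes "prop_i \<Omega>" and "prop_star \<Omega>" and "prop_2star \<Omega>"
    and "\<omega>0 \<in> frontier \<Omega>" and "\<omega>0' \<in> frontier (antipolar \<Omega>)"
    and "fst \<omega>0' * fst \<omega>0 - snd \<omega>0' * snd \<omega>0 = 1"
  shows
    "loc_lipschitz_on (conv_domain \<Omega> \<omega>0) (cosh_conv \<Omega> \<omega>0) \<and>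
     loc_lipschitz_on (conv_domain \<Omega> \<omega>0) (sinh_conv \<Omega> \<omega>0) \<and>
     (\<exists>N. N \<in> null_sets lebesgue \<and>
        (\<forall>\<theta> \<in> conv_domain \<Omega> \<omega>0 - N.
           cosh_conv \<Omega> \<omega>0 differentiable (at \<theta>) \<and> sinh_conv \<Omega> \<omega>0 differentiable (at \<theta>))) \<and>
     (\<forall>\<theta> \<in> conv_domain \<Omega> \<omega>0. \<forall>\<eta>. dual_angles \<Omega> \<omega>0 \<omega>0' \<theta> = {\<eta>} \<longrightarrow>
        (cosh_conv \<Omega> \<omega>0 has_real_derivative sinh_conv (antipolar \<Omega>) \<omega>0' \<eta>) (at \<theta>) \<and>
        (sinh_conv \<Omega> \<omega>0 has_real_derivative cosh_conv (antipolar \<Omega>) \<omega>0' \<eta>) (at \<theta>)) \<and>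
     (\<exists>Lc Rc :: real \<Rightarrow> real.
        (\<forall>\<theta> \<in> conv_domain \<Omega> \<omega>0.
           (cosh_conv \<Omega> \<omega>0 has_real_derivative Lc \<theta>) (at \<theta> within {..\<theta>}) \<and>
           (cosh_conv \<Omega> \<omega>0 has_real_derivative Rc \<theta>) (at \<theta> within {\<theta>..})) \<and>
        countable {\<theta> \<in> conv_domain \<Omega> \<omega>0. Lc \<theta> \<noteq> Rc \<theta>} \<and>
        (\<forall>\<theta> \<in> conv_domain \<Omega> \<omega>0. Lc \<theta> \<noteq> Rc \<theta> \<longrightarrow>
           (\<forall>\<eta> \<in> dual_angles \<Omega> \<omega>0 \<omega>0' \<theta>.
              min (Lc \<theta>) (Rc \<theta>) \<le> sinh_conv (antipolar \<Omega>) \<omega>0' \<eta> \<and>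
              sinh_conv (antipolar \<Omega>) \<omega>0' \<eta> \<le> max (Lc \<theta>) (Rc \<theta>)))) \<and>
     (\<exists>Ls Rs :: real \<Rightarrow> real.
        (\<forall>\<theta> \<in> conv_domain \<Omega> \<omega>0.
           (sinh_conv \<Omega> \<omega>0 has_real_derivative Ls \<theta>) (at \<theta> within {..\<theta>}) \<and>
           (sinh_conv \<Omega> \<omega>0 has_real_derivative Rs \<theta>) (at \<theta> within {\<theta>..})) \<and>
        countable {\<theta> \<in> conv_domain \<Omega> \<omega>0. Ls \<theta> \<noteq> Rs \<theta>} \<and>
        (\<forall>\<theta> \<in> conv_domain \<Omega> \<omega>0. Ls \<theta> \<noteq> Rs \<theta> \<longrightarrow>
           (\<forall>\<eta> \<in> dual_angles \<Omega> \<omega>0 \<omega>0' \<theta>.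
              min (Ls \<theta>) (Rs \<theta>) \<le> cosh_conv (antipolar \<Omega>) \<omega>0' \<eta> \<and>
              cosh_conv (antipolar \<Omega>) \<omega>0' \<eta> \<le> max (Ls \<theta>) (Rs \<theta>))))"
proof -
  have pairing: "hdot \<omega>0' \<omega>0 = 1" using assms(6) by (simp add: hdot_def)
  interpret convex_trig_pair \<Omega> \<omega>0 \<omega>0'
    unfolding convex_trig_pair_def
    using convex_trig_domain_of_props[OF assms(1,2,4,5) pairing]
      convex_trig_domain_antipolar[OF assms(1,3,4,5) pairing] by blast
  have coordinates: "cosh_conv K w = (\<lambda>\<theta>. fst (conv_point K w \<theta>))"
    "sinh_conv K w = (\<lambda>\<theta>. snd (conv_point K w \<theta>))" for K w
    by (simp_all add: fun_eq_iff cosh_conv_def sinh_conv_def)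
  show ?thesis
    unfolding coordinates
    using loc_lipschitz_on_conv_point[OF bounded_linear_fst] loc_lipschitz_on_conv_point[OF bounded_linear_snd]
      kinks_null differentiable_off_kinks[OF bounded_linear_fst] differentiable_off_kinks[OF bounded_linear_snd]
      has_real_derivative_bounded_linear[OF bounded_linear_fst has_derivative_if_unique_dual_angle]
      has_real_derivative_bounded_linear[OF bounded_linear_snd has_derivative_if_unique_dual_angle]
      one_sided_derivatives_bracket[OF bounded_linear_fst] one_sided_derivatives_bracket[OF bounded_linear_snd]
    by simp blast
qed

end
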